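(* Consider a fixed time interval $[0,T]$ divided into $L$ time steps, so that the CFL number $\mu=\mu(L)$ is proportional to the step size $T/L$ and hence $\mu(L)\to0$ as $L\to\infty$. Let $\mathbf{T}^{(L)}(\mu)=\mathbf{T}_S(\mu)\,\mathbf{T}_{\mathrm{CGC}}(\mu)$ be the PFASST iteration matrix for $L$ time steps (as defined in the context) with $\mu=\mu(L)$. Then $$\rho\Big(\lim_{L\to\infty}\mathbf{T}^{(L)}(\mu(L))\Big)\ge1.$$
   Context: Fix positive integers $M$ (collocation nodes), $N$ (spatial degrees of freedom), and coarse sizes $\tilde M\le M$, $\tilde N<N$ (coarsening in space). $\mathbf{Q}=(q_{m,j})\in\mathbb{R}^{M\times M}$ with $q_{m,j}=\int_0^{\tau_m}\ell_j(s)\,ds$ is the collocation matrix for the (right) Gauss–Radau nodes $0<\tau_1<\dots<\tau_M=1$ on $[0,1]$; $\mathbf{Q}_\Delta$, $\tilde{\mathbf{Q}}_\Delta$ are lower-triangular weight matrices of simpler quadrature rules on the fine and coarse nodes. $\mathbf{A}\in\mathbb{C}^{N\times N}$, $\tilde{\mathbf{A}}\in\mathbb{C}^{\tilde N\times\tilde N}$. $\mathbf{N}_M$, $\tilde{\mathbf{N}}_{\tilde M}$ are the $M\times M$, $\tilde M\times\tilde M$ matrices with ones in the last column and zeros elsewhere; $\mathbf{H}=\mathbf{N}_M\otimes\mathbf{I}_N$, $\tilde{\mathbf{H}}=\tilde{\mathbf{N}}_{\tilde M}\otimes\mathbf{I}_{\tilde N}$; $\mathbf{E}\in\mathbb{R}^{L\times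 L}$ has ones on the first subdiagonal and zeros elsewhere. $\mathbf{C}=\mathbf{I}_{LMN}-\mu\,\mathbf{I}_L\otimes\mathbf{Q}\otimes\mathbf{A}-\mathbf{E}\otimes\mathbf{H}$, $\hat{\mathbf{P}}=\mathbf{I}_{LMN}-\mu\,\mathbf{I}_L\otimes\mathbf{Q}_\Delta\otimes\mathbf{A}$, $\tilde{\mathbf{P}}=\mathbf{I}_{L\tilde M\tilde N}-\mu\,\mathbf{I}_L\otimes\tilde{\mathbf{Q}}_\Delta\otimes\tilde{\mathbf{A}}-\mathbf{E}\otimes\tilde{\mathbf{H}}$ (both invertible). Restriction $\mathbf{T}_F^C=\mathbf{I}_L\otimes\mathbf{T}_{F,Q}^C\otimes\mathbf{T}_{F,A}^C$ and interpolation $\mathbf{T}_C^F=\mathbf{I}_L\otimes\mathbf{T}_{C,Q}^F\otimes\mathbf{T}_{C,A}^F$ (standard Lagrangian transfer on the nodes and in space, $\mathbf{T}_{F,A}^C\in\mathbb{R}^{\tilde N\times N}$, $\mathbf{T}_{C,A}^F\in\mathbb{R}^{N\times\tilde N}$), with $(\mathbf{E}\otimes\tilde{\mathbf{H}})\mathbf{T}_F^C=\mathbf{T}_F^C(\mathbf{E}\otimes\mathbf{H})$. $\mathbf{T}_S(\mu)=\mathbf{I}_{LMN}-\hat{\mathbf{P}}^{-1}\mathbf{C}$, $\mathbf{T}_{\mathrm{CGC}}(\mu)=\mathbf{I}_{LMN}-\mathbf{T}_C^F\tilde{\mathbf{P}}^{-1}\mathbf{T}_F^C\mathbf{C}$.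 The limit $L\to\infty$ of these block matrices of growing size is understood as an infinite block Toeplitz operator in the sense of Bolten–Rittich: for an infinite block Toeplitz matrix with matrix-valued generating symbol $\hat{\mathbf{T}}(x)$, $x\in[-\pi,\pi]$, its spectral radius is $\operatorname{ess\,sup}_{x\in[-\pi,\pi]}\rho(\hat{\mathbf{T}}(x))$; $\rho$ denotes the spectral radius. *)

theory Defs
  imports "HOL-Probability.Essential_Supremum" "Jordan_Normal_Form.Spectral_Radius"
begin

definition kron :: "'a::times mat \<Rightarrow> 'a mat \<Rightarrow> 'a mat" where
  "kron A B = mat (dim_row A * dim_row B) (dim_col A * dim_col B)
     (\<lambda>(i,j). A $$ (i div dim_row B, j div dim_col B) * B $$ (i mod dim_row B, j mod dim_col B))"

definition cmat :: "real mat \<Rightarrow> complex mat" where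
  "cmat A = map_mat complex_of_real A"

definition minv :: "complex mat \<Rightarrow> complex mat" where
  "minv A = (SOME B. B \<in> carrier_mat (dim_row A) (dim_row A) \<and> A * B = 1\<^sub>m (dim_row A) \<and> B * A = 1\<^sub>m (dim_row A))"

definition lower_tri :: "nat \<Rightarrow> real mat \<Rightarrow> bool" where
  "lower_tri n A \<longleftrightarrow> A \<in> carrier_mat n n \<and> (\<forall>i<n. \<forall>j<n. i < j \<longrightarrow> A $$ (i,j) = 0)"

definition Nlast :: "nat \<Rightarrow> complex mat" where
  "Nlast m = mat m m (\<lambda>(i,j). if j = m - 1 then 1 else 0)"

definition Esub :: "nat \<Rightarrow> complex mat" where
  "Esub L = mat L L (\<lambda>(i,j). if i = j + 1 then 1 else 0)"

definition lagrange_basis :: "nat \<Rightarrow> (nat \<Rightarrow> real) \<Rightarrow> nat \<Rightarrow> real \<Rightarrow> real" where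
  "lagrange_basis M tau j t = (\<Prod>m\<in>{0..<M} - {j}. (t - tau m) / (tau j - tau m))"

definition right_radau_nodes :: "nat \<Rightarrow> (nat \<Rightarrow> real) \<Rightarrow> bool" where
  "right_radau_nodes M tau \<longleftrightarrow> 0 < M \<and> 0 < tau 0 \<and> tau (M - 1) = 1 \<and>
     (\<forall>i j. i < j \<longrightarrow> j < M \<longrightarrow> tau i < tau j) \<and>
     (\<exists>w. \<forall>p :: real poly. degree p \<le> 2 * M - 2 \<longrightarrow>
          (\<Sum>i<M. w i * poly p (tau i)) = integral {0..1} (poly p))"

definition collocation_Q :: "nat \<Rightarrow> (nat \<Rightarrow> real) \<Rightarrow> real mat" where
  "collocation_Q M tau = mat M M (\<lambda>(m,j). integral {0..tau m} (lagrange_basis M tau j))"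

definition lagrange_transfer :: "nat \<Rightarrow> (nat \<Rightarrow> real) \<Rightarrow> nat \<Rightarrow> (nat \<Rightarrow> real) \<Rightarrow> real mat" where
  "lagrange_transfer K sig M tau = mat K M (\<lambda>(i,j). lagrange_basis M tau j (sig i))"

definition Cmat :: "nat \<Rightarrow> nat \<Rightarrow> nat \<Rightarrow> real mat \<Rightarrow> complex mat \<Rightarrow> real \<Rightarrow> complex mat" where
  "Cmat L M N Q A mu = 1\<^sub>m (L*M*N) - (complex_of_real mu) \<cdot>\<^sub>m kron (1\<^sub>m L) (kron (cmat Q) A)
     - kron (Esub L) (kron (Nlast M) (1\<^sub>m N))"

definition Phat :: "nat \<Rightarrow> nat \<Rightarrow> nat \<Rightarrow> real mat \<Rightarrow> complex mat \<Rightarrow> real \<Rightarrow> complex mat" where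
  "Phat L M N QD A mu = 1\<^sub>m (L*M*N) - (complex_of_real mu) \<cdot>\<^sub>m kron (1\<^sub>m L) (kron (cmat QD) A)"

definition Ptilde :: "nat \<Rightarrow> nat \<Rightarrow> nat \<Rightarrow> real mat \<Rightarrow> complex mat \<Rightarrow> real \<Rightarrow> complex mat" where
  "Ptilde L Mt Nt QtD At mu = 1\<^sub>m (L*Mt*Nt) - (complex_of_real mu) \<cdot>\<^sub>m kron (1\<^sub>m L) (kron (cmat QtD) At)
     - kron (Esub L) (kron (Nlast Mt) (1\<^sub>m Nt))"

definition T_S :: "nat \<Rightarrow> nat \<Rightarrow> nat \<Rightarrow> real mat \<Rightarrow> real mat \<Rightarrow> complex mat \<Rightarrow> real \<Rightarrow> complex mat" where
  "T_S L M N Q QD A mu = 1\<^sub>m (L*M*N) - minv (Phat L M N QD A mu) * Cmat L M N Q A mu"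

definition T_CGC :: "nat \<Rightarrow> nat \<Rightarrow> nat \<Rightarrow> nat \<Rightarrow> nat \<Rightarrow> real mat \<Rightarrow> complex mat \<Rightarrow> real mat \<Rightarrow> complex mat
    \<Rightarrow> real mat \<Rightarrow> real mat \<Rightarrow> real mat \<Rightarrow> real mat \<Rightarrow> real \<Rightarrow> complex mat" where
  "T_CGC L M N Mt Nt Q A QtD At TFQC TCQF TFAC TCAF mu =
     1\<^sub>m (L*M*N) - kron (1\<^sub>m L) (kron (cmat TCQF) (cmat TCAF)) * minv (Ptilde L Mt Nt QtD At mu)
       * kron (1\<^sub>m L) (kron (cmat TFQC) (cmat TFAC)) * Cmat L M N Q A mu"

definition blk :: "nat \<Rightarrow> 'a mat \<Rightarrow> nat \<Rightarrow> nat \<Rightarrow> 'a mat" where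
  "blk b X i j = mat b b (\<lambda>(r,s). X $$ (i*b + r, j*b + s))"

text \<open>Blocks T_k (k in Z) of the infinite block Toeplitz operator obtained as the limit
  L \<rightarrow> \<infinity> of a sequence X L of L x L block matrices with b x b blocks:
  T_k is the entrywise limit of block (k,0) (k \<ge> 0), resp. block (0,-k) (k < 0).\<close>
definition toeplitz_limit_blocks :: "nat \<Rightarrow> (nat \<Rightarrow> complex mat) \<Rightarrow> int \<Rightarrow> complex mat" where
  "toeplitz_limit_blocks b X k = mat b b (\<lambda>(r,s).
     lim (\<lambda>L. (if k \<ge> 0 then blk b (X L) (nat k) 0 else blk b (X L) 0 (nat (- k))) $$ (r,s)))"

definition toeplitz_symbol :: "nat \<Rightarrow> (int \<Rightarrow> complex mat) \<Rightarrow> real \<Rightarrow> complex mat" where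
  "toeplitz_symbol b B x = mat b b (\<lambda>(r,s). \<Sum>\<^sub>\<infinity>k::int. B k $$ (r,s) * cis (real_of_int k * x))"

definition toeplitz_spectral_radius :: "nat \<Rightarrow> (int \<Rightarrow> complex mat) \<Rightarrow> ereal" where
  "toeplitz_spectral_radius b B =
     esssup (restrict_space lborel {-pi..pi}) (\<lambda>x. ereal (spectral_radius (toeplitz_symbol b B x)))"

end

theory Submission
  imports Defs
begin

text \<open>The PFASST iteration matrix is block lower triangular, and its leading \<open>K\<times>K\<close> block part
  is the \<open>K\<close>-step iteration matrix at the same \<open>\<mu>\<close>. Hence block \<open>k\<close> of the Toeplitz limit is
  the \<open>\<mu> \<rightarrow> 0\<close> limit of block \<open>(k,0)\<close> of the \<open>(k+1)\<close>-step iteration. At \<open>\<mu> = 0\<close> the smoother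
  collapses to the shift \<open>S = E \<otimes> N\<^sub>M \<otimes> I\<close>, and, since restriction commutes with the shift, the
  coarse-grid correction collapses to \<open>I - T\<^sub>C\<^sup>F T\<^sub>F\<^sup>C\<close>. So only the first subdiagonal block survives
  and the symbol is \<open>e\<^sup>i\<^sup>x (N\<^sub>M \<otimes> I)(I - T\<^sub>C\<^sup>F T\<^sub>F\<^sup>C)\<close> (one block). Because \<open>\<tilde>N < N\<close>, some \<open>w \<noteq> 0\<close>
  satisfies \<open>T\<^sub>F\<^sub>,\<^sub>A\<^sup>C w = 0\<close>; then \<open>\<one> \<otimes> w\<close> is an eigenvector with eigenvalue \<open>e\<^sup>i\<^sup>x\<close> of modulus 1.\<close>

(* HOL-Analysis writes \<open>$\<close> for \<open>vec_nth\<close>; here it is always Jordan_Normal_Form's vector index. *)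
unbundle no vec_syntax

lemma dim_row_kron [simp]: "dim_row (kron A B) = dim_row A * dim_row B"
  and dim_col_kron [simp]: "dim_col (kron A B) = dim_col A * dim_col B"
  by (simp_all add: kron_def)

lemma index_kron [simp]:
  "i < dim_row A * dim_row B \<Longrightarrow> j < dim_col A * dim_col B \<Longrightarrow>
   kron A B $$ (i,j) = A $$ (i div dim_row B, j div dim_col B) * B $$ (i mod dim_row B, j mod dim_col B)"
  by (simp add: kron_def)

lemma kron_carrier_mat:
  "A \<in> carrier_mat a b \<Longrightarrow> B \<in> carrier_mat c d \<Longrightarrow> kron A B \<in> carrier_mat (a * c) (b * d)"
  by auto

lemma kron3_carrier_mat:
  "Z \<in> carrier_mat K K \<Longrightarrow> X \<in> carrier_mat a b \<Longrightarrow> Y \<in> carrier_mat c d \<Longrightarrow>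
   kron Z (kron X Y) \<in> carrier_mat (K * a * c) (K * b * d)"
  by (auto simp: mult.assoc)

lemma dim_row_cmat [simp]: "dim_row (cmat A) = dim_row A"
  and dim_col_cmat [simp]: "dim_col (cmat A) = dim_col A"
  unfolding cmat_def by auto

lemma cmat_carrier_mat [simp]: "A \<in> carrier_mat n m \<Longrightarrow> cmat A \<in> carrier_mat n m"
  unfolding cmat_def by auto

lemma Nlast_carrier_mat [simp]: "Nlast m \<in> carrier_mat m m"
  and dim_row_Nlast [simp]: "dim_row (Nlast m) = m"
  and dim_col_Nlast [simp]: "dim_col (Nlast m) = m"
  unfolding Nlast_def by auto

lemma Esub_carrier_mat [simp]: "Esub m \<in> carrier_mat m m"
  and dim_row_Esub [simp]: "dim_row (Esub m) = m"
  and dim_col_Esub [simp]: "dim_col (Esub m) = m"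
  unfolding Esub_def by auto

lemma sum_mult_div_mod:
  "(\<Sum>j<m * n. f (j div n) (j mod n)) = (\<Sum>a<m. \<Sum>b<n. f a b)" for f :: "nat \<Rightarrow> nat \<Rightarrow> 'a::comm_monoid_add"
proof -
  have "(\<Sum>j<m * n. f (j div n) (j mod n)) = (\<Sum>a<m. \<Sum>j\<in>{a * n..<a * n + n}. f (j div n) (j mod n))"
    by (rule sum.nat_group[symmetric])
  also have "\<dots> = (\<Sum>a<m. \<Sum>b<n. f a b)"
  proof (rule sum.cong[OF refl])
    fix a
    show "(\<Sum>j\<in>{a * n..<a * n + n}. f (j div n) (j mod n)) = (\<Sum>b<n. f a b)"
      by (rule sum.reindex_bij_witness[of _ "\<lambda>b. a * n + b" "\<lambda>j. j - a * n"]) (auto dest!: le_Suc_ex)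
  qed
  finally show ?thesis .
qed

lemma index_mult_mat_vec_sum:
  "A \<in> carrier_mat n m \<Longrightarrow> v \<in> carrier_vec m \<Longrightarrow> i < n \<Longrightarrow> (A *\<^sub>v v) $ i = (\<Sum>j<m. A $$ (i,j) * v $ j)"
  by (auto simp: scalar_prod_def lessThan_atLeast0 intro!: sum.cong)

lemma smult_mult_mat_vec:
  fixes A :: "'a::comm_semiring_0 mat"
  shows "A \<in> carrier_mat n m \<Longrightarrow> v \<in> carrier_vec m \<Longrightarrow> (k \<cdot>\<^sub>m A) *\<^sub>v v = k \<cdot>\<^sub>v (A *\<^sub>v v)"
  by (intro eq_vecI) (auto simp: scalar_prod_def sum_distrib_left mult.assoc)

subsection \<open>Kronecker products of vectors\<close>

definition kron_vec :: "'a::times vec \<Rightarrow> 'a vec \<Rightarrow> 'a vec" where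
  "kron_vec u w = vec (dim_vec u * dim_vec w) (\<lambda>j. u $ (j div dim_vec w) * w $ (j mod dim_vec w))"

lemma dim_kron_vec [simp]: "dim_vec (kron_vec u w) = dim_vec u * dim_vec w"
  by (simp add: kron_vec_def)

lemma index_kron_vec [simp]:
  "j < dim_vec u * dim_vec w \<Longrightarrow> kron_vec u w $ j = u $ (j div dim_vec w) * w $ (j mod dim_vec w)"
  by (simp add: kron_vec_def)

lemma kron_vec_zero: "kron_vec u (0\<^sub>v n) = (0\<^sub>v (dim_vec u * n) :: 'a::mult_zero vec)"
proof (rule eq_vecI)
  fix i assume "i < dim_vec (0\<^sub>v (dim_vec u * n) :: 'a vec)"
  hence "i < dim_vec u * n" and "0 < n" by (simp_all, cases n) auto
  thus "kron_vec u (0\<^sub>v n) $ i = 0\<^sub>v (dim_vec u * n) $ i" by simp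
qed simp

lemma kron_vec_nonzero:
  fixes u w :: "complex vec"
  assumes u: "u \<noteq> 0\<^sub>v (dim_vec u)" and w: "w \<noteq> 0\<^sub>v (dim_vec w)"
  shows "kron_vec u w \<noteq> 0\<^sub>v (dim_vec u * dim_vec w)"
proof -
  have nonzero_entry: "\<exists>i < dim_vec z. z $ i \<noteq> 0" if "z \<noteq> 0\<^sub>v (dim_vec z)" for z :: "complex vec"
  proof (rule ccontr)
    assume "\<not> (\<exists>i < dim_vec z. z $ i \<noteq> 0)"
    hence "z = 0\<^sub>v (dim_vec z)" by (intro eq_vecI) auto
    with that show False by contradiction
  qed
  obtain i where i: "i < dim_vec u" "u $ i \<noteq> 0" using nonzero_entry[OF u] by blast
  obtain j where j: "j < dim_vec w" "w $ j \<noteq> 0" using nonzero_entry[OF w] by blast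
  have ij: "j + i * dim_vec w < dim_vec u * dim_vec w"
  proof -
    have "j + i * dim_vec w < Suc i * dim_vec w" using j(1) by simp
    also have "\<dots> \<le> dim_vec u * dim_vec w" using i(1) by (intro mult_le_mono1) simp
    finally show ?thesis .
  qed
  have "dim_vec w \<noteq> 0" using j(1) by linarith
  hence "kron_vec u w $ (j + i * dim_vec w) \<noteq> 0" using ij i(2) j by simp
  thus ?thesis using ij by (metis index_zero_vec(1))
qed

lemma mult_kron_vec:
  fixes X Y :: "'a::comm_semiring_0 mat"
  assumes "dim_col X = dim_vec u" and "dim_col Y = dim_vec w"
  shows "kron X Y *\<^sub>v kron_vec u w = kron_vec (X *\<^sub>v u) (Y *\<^sub>v w)"
proof (rule eq_vecI)
  fix i assume "i < dim_vec (kron_vec (X *\<^sub>v u) (Y *\<^sub>v w))"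
  hence i: "i < dim_row X * dim_row Y" by simp
  hence "0 < dim_row Y" by (cases "dim_row Y") auto
  hence div: "i div dim_row Y < dim_row X" and mod: "i mod dim_row Y < dim_row Y"
    using i by (auto simp: less_mult_imp_div_less)
  have "(kron X Y *\<^sub>v kron_vec u w) $ i =
      (\<Sum>j<dim_col X * dim_col Y. X $$ (i div dim_row Y, j div dim_col Y) * Y $$ (i mod dim_row Y, j mod dim_col Y)
         * (u $ (j div dim_col Y) * w $ (j mod dim_col Y)))"
    using i assms by (auto simp: scalar_prod_def lessThan_atLeast0 intro!: sum.cong)
  also have "\<dots> = (\<Sum>a<dim_col X. \<Sum>b<dim_col Y.
      X $$ (i div dim_row Y, a) * Y $$ (i mod dim_row Y, b) * (u $ a * w $ b))"
    by (rule sum_mult_div_mod[where f = "\<lambda>a b. X $$ (i div dim_row Y, a) * Y $$ (i mod dim_row Y, b) * (u $ a * w $ b)"])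
  also have "\<dots> = (\<Sum>a<dim_col X. X $$ (i div dim_row Y, a) * u $ a) * (\<Sum>b<dim_col Y. Y $$ (i mod dim_row Y, b) * w $ b)"
    unfolding sum_product by (intro sum.cong refl) (simp add: mult_ac)
  also have "\<dots> = (X *\<^sub>v u) $ (i div dim_row Y) * (Y *\<^sub>v w) $ (i mod dim_row Y)"
    using div mod assms by (simp add: scalar_prod_def lessThan_atLeast0)
  also have "\<dots> = kron_vec (X *\<^sub>v u) (Y *\<^sub>v w) $ i"
    using i by simp
  finally show "(kron X Y *\<^sub>v kron_vec u w) $ i = kron_vec (X *\<^sub>v u) (Y *\<^sub>v w) $ i" .
qed simp

lemma blk_mult_vec:
  fixes Y :: "'a::comm_ring_1 mat"
  assumes Y: "Y \<in> carrier_mat (K * b) (K * b)" and i: "i < K" and j: "j < K" and v: "v \<in> carrier_vec b"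
  shows "blk b Y i j *\<^sub>v v = vec b (\<lambda>r. (Y *\<^sub>v kron_vec (unit_vec K j) v) $ (i * b + r))"
proof (rule eq_vecI)
  fix r assume "r < dim_vec (vec b (\<lambda>r. (Y *\<^sub>v kron_vec (unit_vec K j) v) $ (i * b + r)))"
  hence r: "r < b" by simp
  have row: "i * b + r < K * b"
  proof -
    have "i * b + r < Suc i * b" using r by simp
    also have "\<dots> \<le> K * b" using i by (intro mult_le_mono1) simp
    finally show ?thesis .
  qed
  have "(Y *\<^sub>v kron_vec (unit_vec K j) v) $ (i * b + r)
      = (\<Sum>t<K * b. Y $$ (i * b + r, t div b * b + t mod b) * (unit_vec K j $ (t div b) * v $ (t mod b)))"
    using Y v row by (auto simp: scalar_prod_def lessThan_atLeast0 intro!: sum.cong)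
  also have "\<dots> = (\<Sum>a<K. \<Sum>s<b. Y $$ (i * b + r, a * b + s) * (unit_vec K j $ a * v $ s))"
    by (rule sum_mult_div_mod[where f = "\<lambda>a s. Y $$ (i * b + r, a * b + s) * (unit_vec K j $ a * v $ s)"])
  also have "\<dots> = (\<Sum>a<K. if a = j then (\<Sum>s<b. Y $$ (i * b + r, a * b + s) * v $ s) else 0)"
    using j by (intro sum.cong) auto
  also have "\<dots> = (\<Sum>s<b. Y $$ (i * b + r, j * b + s) * v $ s)"
    using j by simp
  also have "\<dots> = (blk b Y i j *\<^sub>v v) $ r"
    using r v by (auto simp: blk_def scalar_prod_def lessThan_atLeast0 intro!: sum.cong)
  finally show "(blk b Y i j *\<^sub>v v) $ r = vec b (\<lambda>r. (Y *\<^sub>v kron_vec (unit_vec K j) v) $ (i * b + r)) $ r"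
    using r by simp
qed (simp add: blk_def)

subsection \<open>Inverses, determinants and kernels\<close>

lemma minv_eqI:
  fixes A :: "complex mat"
  assumes A: "A \<in> carrier_mat n n" and B: "B \<in> carrier_mat n n" and AB: "A * B = 1\<^sub>m n"
  shows "minv A = B"
proof -
  have "B * A = 1\<^sub>m n" using mat_mult_left_right_inverse[OF A B AB] .
  hence "minv A \<in> carrier_mat n n \<and> A * minv A = 1\<^sub>m n \<and> minv A * A = 1\<^sub>m n"
    using someI[of "\<lambda>B. B \<in> carrier_mat (dim_row A) (dim_row A) \<and> A * B = 1\<^sub>m (dim_row A)
        \<and> B * A = 1\<^sub>m (dim_row A)" B] A B AB unfolding minv_def by auto
  hence C: "minv A \<in> carrier_mat n n" and CA: "minv A * A = 1\<^sub>m n" by auto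
  have "minv A = minv A * (A * B)" using AB C by simp
  also have "\<dots> = (minv A * A) * B" using A B C by (simp add: assoc_mult_mat)
  also have "\<dots> = B" using CA B by simp
  finally show ?thesis .
qed

lemma minv_inverse:
  fixes A :: "complex mat"
  assumes A: "A \<in> carrier_mat n n" and inv: "invertible_mat A"
  shows "minv A \<in> carrier_mat n n" "A * minv A = 1\<^sub>m n" "minv A * A = 1\<^sub>m n"
proof -
  from inv obtain B where AB: "A * B = 1\<^sub>m (dim_row A)" and BA: "B * A = 1\<^sub>m (dim_row B)"
    unfolding invertible_mat_def inverts_mat_def by auto
  have B: "B \<in> carrier_mat n n"
    using arg_cong[OF AB, of dim_col] arg_cong[OF BA, of dim_col] A by auto
  have "minv A = B" using minv_eqI[OF A B] AB A by simp
  thus "minv A \<in> carrier_mat n n" "A * minv A = 1\<^sub>m n" "minv A * A = 1\<^sub>m n"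
    using B AB mat_mult_left_right_inverse[OF A B] A by auto
qed

lemma mult_scaled_adj_mat:
  fixes A :: "complex mat"
  assumes A: "A \<in> carrier_mat n n" and d: "det A \<noteq> 0"
  shows "A * ((1 / det A) \<cdot>\<^sub>m adj_mat A) = 1\<^sub>m n"
proof -
  have "A * ((1 / det A) \<cdot>\<^sub>m adj_mat A) = (1 / det A) \<cdot>\<^sub>m (det A \<cdot>\<^sub>m 1\<^sub>m n)"
    using mult_smult_distrib[OF A adj_mat(1)[OF A]] adj_mat(2)[OF A] by simp
  also have "\<dots> = 1\<^sub>m n" using d by (intro eq_matI) auto
  finally show ?thesis .
qed

lemma minv_adj_mat:
  fixes A :: "complex mat"
  assumes A: "A \<in> carrier_mat n n" and d: "det A \<noteq> 0"
  shows "minv A = (1 / det A) \<cdot>\<^sub>m adj_mat A"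
  using minv_eqI[OF A _ mult_scaled_adj_mat[OF A d]] adj_mat(1)[OF A] by simp

lemma invertible_mat_if_det_nonzero:
  fixes A :: "complex mat"
  assumes A: "A \<in> carrier_mat n n" and d: "det A \<noteq> 0"
  shows "invertible_mat A"
proof -
  let ?B = "(1 / det A) \<cdot>\<^sub>m adj_mat A"
  have B: "?B \<in> carrier_mat n n" using adj_mat(1)[OF A] by simp
  have AB: "A * ?B = 1\<^sub>m n" by (rule mult_scaled_adj_mat[OF A d])
  have BA: "?B * A = 1\<^sub>m n" by (rule mat_mult_left_right_inverse[OF A B AB])
  have "inverts_mat A ?B" "inverts_mat ?B A"
    using A adj_mat(1)[OF A] AB BA by (simp_all add: inverts_mat_def)
  moreover have "square_mat A" using A by simp
  ultimately show ?thesis unfolding invertible_mat_def by blast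
qed

lemma det_one_minus_strictly_lower:
  fixes X :: "'a::comm_ring_1 mat"
  assumes X: "X \<in> carrier_mat n n" and low: "\<And>i j. i < n \<Longrightarrow> j < n \<Longrightarrow> X $$ (i,j) \<noteq> 0 \<Longrightarrow> j < i"
  shows "det (1\<^sub>m n - X) = 1"
proof -
  have "det (1\<^sub>m n - X) = prod_list (diag_mat (1\<^sub>m n - X))"
  proof (rule det_lower_triangular)
    fix i j assume "i < j" "j < n"
    thus "(1\<^sub>m n - X) $$ (i,j) = 0" using low[of i j] X by force
  qed (use X in auto)
  also have "diag_mat (1\<^sub>m n - X) = map (\<lambda>_. 1) [0..<n]"
  proof -
    have "\<forall>i<n. X $$ (i,i) = 0" using low by (metis less_irrefl)
    thus ?thesis using X by (auto simp: diag_mat_def intro!: map_cong)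
  qed
  also have "prod_list (map (\<lambda>_. 1::'a) [0..<n]) = 1" by (induct n) auto
  finally show ?thesis .
qed

lemma exists_nonzero_kernel_vec:
  fixes A :: "complex mat"
  assumes A: "A \<in> carrier_mat m n" and mn: "m < n"
  obtains w where "w \<in> carrier_vec n" "w \<noteq> 0\<^sub>v n" "A *\<^sub>v w = 0\<^sub>v m"
proof -
  \<comment> \<open>Pad \<open>A\<close> with zero rows to a singular square matrix.\<close>
  define A' where "A' = mat\<^sub>r n n (\<lambda>i. if i = n - 1 then 0\<^sub>v n else vec n (\<lambda>j. if i < m then A $$ (i,j) else 0))"
  have A': "A' \<in> carrier_mat n n" unfolding A'_def by simp
  have "det A' = 0" unfolding A'_def using mn by (intro det_row_0) auto
  then obtain w where w: "w \<in> carrier_vec n" "w \<noteq> 0\<^sub>v n" and A'w: "A' *\<^sub>v w = 0\<^sub>v n"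
    using det_0_iff_vec_prod_zero[OF A'] by auto
  have "A *\<^sub>v w = 0\<^sub>v m"
  proof (rule eq_vecI)
    fix i assume "i < dim_vec (0\<^sub>v m :: complex vec)"
    hence i: "i < m" by simp
    have "(A *\<^sub>v w) $ i = (A' *\<^sub>v w) $ i"
      using i mn A w by (auto simp: A'_def scalar_prod_def intro!: sum.cong)
    thus "(A *\<^sub>v w) $ i = 0\<^sub>v m $ i" using A'w i mn by simp
  qed (use A in simp)
  with w show ?thesis using that by blast
qed

subsection \<open>Leading principal parts of block lower triangular matrices\<close>

definition upper_right_zero :: "nat \<Rightarrow> nat \<Rightarrow> 'a::zero mat \<Rightarrow> bool" where
  "upper_right_zero k1 k2 X \<longleftrightarrow> (\<forall>i j. i < k1 \<longrightarrow> k2 \<le> j \<longrightarrow> j < dim_col X \<longrightarrow> X $$ (i,j) = 0)"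

definition leading_submat :: "nat \<Rightarrow> nat \<Rightarrow> 'a mat \<Rightarrow> 'a mat" where
  "leading_submat k1 k2 X = mat k1 k2 (\<lambda>(i,j). X $$ (i,j))"

lemma leading_submat_carrier_mat [simp]: "leading_submat k1 k2 X \<in> carrier_mat k1 k2"
  and dim_row_leading_submat [simp]: "dim_row (leading_submat k1 k2 X) = k1"
  and dim_col_leading_submat [simp]: "dim_col (leading_submat k1 k2 X) = k2"
  by (simp_all add: leading_submat_def)

lemma index_leading_submat [simp]: "i < k1 \<Longrightarrow> j < k2 \<Longrightarrow> leading_submat k1 k2 X $$ (i,j) = X $$ (i,j)"
  by (simp add: leading_submat_def)

lemma upper_right_zero_one: "k \<le> n \<Longrightarrow> upper_right_zero k k (1\<^sub>m n :: 'a::comm_ring_1 mat)"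
  by (simp add: upper_right_zero_def)

lemma leading_submat_one: "k \<le> n \<Longrightarrow> leading_submat k k (1\<^sub>m n :: 'a::comm_ring_1 mat) = 1\<^sub>m k"
  by (intro eq_matI) auto

lemma upper_right_zero_Esub: "upper_right_zero k k (Esub n)"
  by (simp add: upper_right_zero_def Esub_def)

lemma leading_submat_Esub: "k \<le> n \<Longrightarrow> leading_submat k k (Esub n) = Esub k"
  by (intro eq_matI) (auto simp: Esub_def)

lemma upper_right_zero_diff:
  fixes A B :: "'a::ab_group_add mat"
  assumes "A \<in> carrier_mat n1 n2" "B \<in> carrier_mat n1 n2" "upper_right_zero k1 k2 A" "upper_right_zero k1 k2 B"
    "k1 \<le> n1"
  shows "upper_right_zero k1 k2 (A - B)"
  using assms unfolding upper_right_zero_def by auto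

lemma upper_right_zero_smult:
  fixes A :: "'a::comm_ring_1 mat"
  assumes "A \<in> carrier_mat n1 n2" "upper_right_zero k1 k2 A" "k1 \<le> n1"
  shows "upper_right_zero k1 k2 (c \<cdot>\<^sub>m A)"
  using assms unfolding upper_right_zero_def by auto

lemma upper_right_zero_mult:
  fixes A B :: "'a::comm_ring_1 mat"
  assumes A: "A \<in> carrier_mat n1 n2" and B: "B \<in> carrier_mat n2 n3"
    and zA: "upper_right_zero k1 k2 A" and zB: "upper_right_zero k2 k3 B" and k1: "k1 \<le> n1"
  shows "upper_right_zero k1 k3 (A * B)"
  unfolding upper_right_zero_def
proof (intro allI impI)
  fix i j assume i: "i < k1" and j: "k3 \<le> j" and jc: "j < dim_col (A * B)"
  have "(A * B) $$ (i,j) = (\<Sum>l<n2. A $$ (i,l) * B $$ (l,j))"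
    using A B i jc k1 by (auto simp: scalar_prod_def lessThan_atLeast0 intro!: sum.cong)
  also have "\<dots> = 0"
  proof (rule sum.neutral, intro ballI)
    fix l assume l: "l \<in> {..<n2}"
    show "A $$ (i,l) * B $$ (l,j) = 0"
      using zA zB i j jc l A B unfolding upper_right_zero_def by (cases "l < k2") auto
  qed
  finally show "(A * B) $$ (i,j) = 0" .
qed

lemma leading_submat_diff:
  fixes A B :: "'a::ab_group_add mat"
  assumes "A \<in> carrier_mat n1 n2" "B \<in> carrier_mat n1 n2" "k1 \<le> n1" "k2 \<le> n2"
  shows "leading_submat k1 k2 (A - B) = leading_submat k1 k2 A - leading_submat k1 k2 B"
  using assms by (intro eq_matI) auto

lemma leading_submat_smult:
  fixes A :: "'a::comm_ring_1 mat"
  assumes "A \<in> carrier_mat n1 n2" "k1 \<le> n1" "k2 \<le> n2"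
  shows "leading_submat k1 k2 (c \<cdot>\<^sub>m A) = c \<cdot>\<^sub>m leading_submat k1 k2 A"
  using assms by (intro eq_matI) auto

lemma leading_submat_mult:
  fixes A B :: "'a::comm_ring_1 mat"
  assumes A: "A \<in> carrier_mat n1 n2" and B: "B \<in> carrier_mat n2 n3"
    and zA: "upper_right_zero k1 k2 A" and k: "k1 \<le> n1" "k2 \<le> n2" "k3 \<le> n3"
  shows "leading_submat k1 k3 (A * B) = leading_submat k1 k2 A * leading_submat k2 k3 B"
proof (rule eq_matI)
  fix i j assume "i < dim_row (leading_submat k1 k2 A * leading_submat k2 k3 B)"
    and "j < dim_col (leading_submat k1 k2 A * leading_submat k2 k3 B)"
  hence i: "i < k1" and j: "j < k3" by auto
  have "leading_submat k1 k3 (A * B) $$ (i,j) = (\<Sum>l<n2. A $$ (i,l) * B $$ (l,j))"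
    using A B i j k by (auto simp: scalar_prod_def lessThan_atLeast0 intro!: sum.cong)
  also have "\<dots> = (\<Sum>l<k2. A $$ (i,l) * B $$ (l,j))"
    using k zA i A by (intro sum.mono_neutral_right) (auto simp: upper_right_zero_def)
  also have "\<dots> = (leading_submat k1 k2 A * leading_submat k2 k3 B) $$ (i,j)"
    using i j by (auto simp: scalar_prod_def lessThan_atLeast0 intro!: sum.cong)
  finally show "leading_submat k1 k3 (A * B) $$ (i,j) = (leading_submat k1 k2 A * leading_submat k2 k3 B) $$ (i,j)" .
qed auto

lemma minv_leading_submat:
  fixes A :: "complex mat"
  assumes A: "A \<in> carrier_mat n n" and inv: "invertible_mat A" and zA: "upper_right_zero k k A" and k: "k \<le> n"
  shows "upper_right_zero k k (minv A)" "leading_submat k k (minv A) = minv (leading_submat k k A)"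
proof -
  note B = minv_inverse[OF A inv]
  let ?TA = "leading_submat k k A" and ?TB = "leading_submat k k (minv A)"
  have "?TA * ?TB = leading_submat k k (A * minv A)"
    by (rule leading_submat_mult[OF A B(1) zA k k k, symmetric])
  also have "\<dots> = 1\<^sub>m k" using B(2) leading_submat_one[OF k] by simp
  finally have TT: "?TA * ?TB = 1\<^sub>m k" .
  thus "?TB = minv ?TA" using minv_eqI[of ?TA k ?TB] by simp
  have TT': "?TB * ?TA = 1\<^sub>m k" using mat_mult_left_right_inverse[OF _ _ TT] by simp
  show "upper_right_zero k k (minv A)" unfolding upper_right_zero_def
  proof (intro allI impI)
    fix i j assume i: "i < k" and j: "k \<le> j" and jc: "j < dim_col (minv A)"
    hence jn: "j < n" using B by auto
    \<comment> \<open>The upper-right block \<open>Z\<close> of \<open>minv A\<close> satisfies \<open>?TA * Z = 0\<close> and \<open>?TA\<close> is invertible.\<close>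
    define Z where "Z = mat k (n - k) (\<lambda>(a,b). minv A $$ (a, k + b))"
    have Z: "Z \<in> carrier_mat k (n - k)" unfolding Z_def by auto
    have "?TA * Z = 0\<^sub>m k (n - k)"
    proof (rule eq_matI)
      fix a c assume "a < dim_row (0\<^sub>m k (n - k) :: complex mat)" and "c < dim_col (0\<^sub>m k (n - k) :: complex mat)"
      hence a: "a < k" and c: "c < n - k" by auto
      have "(?TA * Z) $$ (a,c) = (\<Sum>l<k. A $$ (a,l) * minv A $$ (l, k + c))"
        using a c k unfolding Z_def by (auto simp: scalar_prod_def lessThan_atLeast0 intro!: sum.cong)
      also have "\<dots> = (\<Sum>l<n. A $$ (a,l) * minv A $$ (l, k + c))"
        using k zA a A by (intro sum.mono_neutral_right[symmetric]) (auto simp: upper_right_zero_def)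
      also have "\<dots> = (A * minv A) $$ (a, k + c)"
        using a c k A B(1) by (auto simp: scalar_prod_def lessThan_atLeast0 intro!: sum.cong)
      also have "\<dots> = 0" using B(2) a c k by auto
      finally show "(?TA * Z) $$ (a,c) = 0\<^sub>m k (n - k) $$ (a,c)" using a c by simp
    qed (use Z in auto)
    have "Z = (?TB * ?TA) * Z" using TT' Z by simp
    also have "\<dots> = ?TB * (?TA * Z)" by (rule assoc_mult_mat[of ?TB k k ?TA k Z]) (use Z in auto)
    also have "\<dots> = 0\<^sub>m k (n - k)" unfolding \<open>?TA * Z = 0\<^sub>m k (n - k)\<close> by simp
    finally have "Z = 0\<^sub>m k (n - k)" .
    hence "Z $$ (i, j - k) = 0" using i j jn by simp
    thus "minv A $$ (i,j) = 0" using i j jn unfolding Z_def by simp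
  qed
qed

lemma two_grid_leading_submat:
  fixes C Ph Pt P R :: "complex mat"
  assumes C: "C \<in> carrier_mat n n" and Ph: "Ph \<in> carrier_mat n n" and Pt: "Pt \<in> carrier_mat nt nt"
    and P: "P \<in> carrier_mat n nt" and R: "R \<in> carrier_mat nt n"
    and iPh: "invertible_mat Ph" and iPt: "invertible_mat Pt"
    and zC: "upper_right_zero k k C" and zPh: "upper_right_zero k k Ph" and zPt: "upper_right_zero kt kt Pt"
    and zP: "upper_right_zero k kt P" and zR: "upper_right_zero kt k R" and k: "k \<le> n" and kt: "kt \<le> nt"
  shows "upper_right_zero k k ((1\<^sub>m n - minv Ph * C) * (1\<^sub>m n - P * minv Pt * R * C))"
    "leading_submat k k ((1\<^sub>m n - minv Ph * C) * (1\<^sub>m n - P * minv Pt * R * C)) =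
     (1\<^sub>m k - minv (leading_submat k k Ph) * leading_submat k k C) *
     (1\<^sub>m k - leading_submat k kt P * minv (leading_submat kt kt Pt) * leading_submat kt k R * leading_submat k k C)"
proof -
  note mPh = minv_inverse[OF Ph iPh] and mPt = minv_inverse[OF Pt iPt]
  note zmPh = minv_leading_submat[OF Ph iPh zPh k] and zmPt = minv_leading_submat[OF Pt iPt zPt kt]
  have S: "minv Ph * C \<in> carrier_mat n n" using mPh C by auto
  have zS: "upper_right_zero k k (minv Ph * C)" by (rule upper_right_zero_mult[OF mPh(1) C zmPh(1) zC k])
  have U: "1\<^sub>m n - minv Ph * C \<in> carrier_mat n n" using S by (rule minus_carrier_mat)
  have zU: "upper_right_zero k k (1\<^sub>m n - minv Ph * C)"
    by (rule upper_right_zero_diff[OF _ S upper_right_zero_one[OF k] zS k]) auto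
  have lU: "leading_submat k k (1\<^sub>m n - minv Ph * C) = 1\<^sub>m k - minv (leading_submat k k Ph) * leading_submat k k C"
    using leading_submat_mult[OF mPh(1) C zmPh(1) k k k] zmPh(2)
    by (simp add: leading_submat_diff[OF _ S k k] leading_submat_one[OF k])
  have V1: "P * minv Pt \<in> carrier_mat n nt" using P mPt by auto
  have zV1: "upper_right_zero k kt (P * minv Pt)" by (rule upper_right_zero_mult[OF P mPt(1) zP zmPt(1) k])
  have V2: "P * minv Pt * R \<in> carrier_mat n n" using V1 R by auto
  have zV2: "upper_right_zero k k (P * minv Pt * R)" by (rule upper_right_zero_mult[OF V1 R zV1 zR k])
  have V: "P * minv Pt * R * C \<in> carrier_mat n n" using V2 C by auto
  have zV: "upper_right_zero k k (P * minv Pt * R * C)" by (rule upper_right_zero_mult[OF V2 C zV2 zC k])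
  have lV: "leading_submat k k (P * minv Pt * R * C) =
      leading_submat k kt P * minv (leading_submat kt kt Pt) * leading_submat kt k R * leading_submat k k C"
    using leading_submat_mult[OF V2 C zV2 k k k] leading_submat_mult[OF V1 R zV1 k kt k]
      leading_submat_mult[OF P mPt(1) zP k kt kt] zmPt(2) by simp
  have W: "1\<^sub>m n - P * minv Pt * R * C \<in> carrier_mat n n" using V by (rule minus_carrier_mat)
  have zW: "upper_right_zero k k (1\<^sub>m n - P * minv Pt * R * C)"
    by (rule upper_right_zero_diff[OF _ V upper_right_zero_one[OF k] zV k]) auto
  have lW: "leading_submat k k (1\<^sub>m n - P * minv Pt * R * C) =
      1\<^sub>m k - leading_submat k kt P * minv (leading_submat kt kt Pt) * leading_submat kt k R * leading_submat k k C"
    using lV by (simp add: leading_submat_diff[OF _ V k k] leading_submat_one[OF k])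
  show "upper_right_zero k k ((1\<^sub>m n - minv Ph * C) * (1\<^sub>m n - P * minv Pt * R * C))"
    by (rule upper_right_zero_mult[OF U W zU zW k])
  show "leading_submat k k ((1\<^sub>m n - minv Ph * C) * (1\<^sub>m n - P * minv Pt * R * C)) =
     (1\<^sub>m k - minv (leading_submat k k Ph) * leading_submat k k C) *
     (1\<^sub>m k - leading_submat k kt P * minv (leading_submat kt kt Pt) * leading_submat kt k R * leading_submat k k C)"
    using leading_submat_mult[OF U W zU k k k] lU lW by simp
qed

lemma upper_right_zero_kron:
  fixes Z Y :: "'a::mult_zero mat"
  assumes Z: "Z \<in> carrier_mat L L" and zZ: "upper_right_zero K K Z" and Y: "Y \<in> carrier_mat r c"
  shows "upper_right_zero (K * r) (K * c) (kron Z Y)"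
  unfolding upper_right_zero_def
proof (intro allI impI)
  fix i j assume i: "i < K * r" and j: "K * c \<le> j" and jc: "j < dim_col (kron Z Y)"
  have jL: "j < L * c" using jc Z Y by simp
  hence c: "0 < c" by (cases c) auto
  have iK: "i div r < K" using i by (simp add: less_mult_imp_div_less)
  have Kj: "K \<le> j div c" using j c by (metis div_le_mono nonzero_mult_div_cancel_right less_not_refl2)
  have jL': "j div c < L" using jL by (simp add: less_mult_imp_div_less)
  have "K \<le> L" using Kj jL' by linarith
  hence "i < L * r" using i by (meson less_le_trans mult_le_mono1)
  thus "kron Z Y $$ (i,j) = 0"
    using zZ iK Kj jL' jL Z Y unfolding upper_right_zero_def by auto
qed

lemma leading_submat_kron:
  assumes Z: "Z \<in> carrier_mat L L" and Y: "Y \<in> carrier_mat r c" and KL: "K \<le> L"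
  shows "leading_submat (K * r) (K * c) (kron Z Y) = kron (leading_submat K K Z) Y"
proof (rule eq_matI)
  fix i j assume "i < dim_row (kron (leading_submat K K Z) Y)" and "j < dim_col (kron (leading_submat K K Z) Y)"
  hence i: "i < K * r" and j: "j < K * c" using Y by auto
  have "i < L * r" "j < L * c" using i j KL by (meson less_le_trans mult_le_mono1)+
  moreover have "i div r < K" "j div c < K" using i j by (auto simp: less_mult_imp_div_less)
  ultimately show "leading_submat (K * r) (K * c) (kron Z Y) $$ (i,j) = kron (leading_submat K K Z) Y $$ (i,j)"
    using i j Y Z by auto
qed (use Y in auto)

lemma upper_right_zero_identity_minus_kron:
  fixes Y :: "complex mat"
  assumes Y: "Y \<in> carrier_mat b b" and KL: "K \<le> L"
  shows "upper_right_zero (K * b) (K * b) (1\<^sub>m (L * b) - c \<cdot>\<^sub>m kron (1\<^sub>m L) Y)"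
    "leading_submat (K * b) (K * b) (1\<^sub>m (L * b) - c \<cdot>\<^sub>m kron (1\<^sub>m L) Y) = 1\<^sub>m (K * b) - c \<cdot>\<^sub>m kron (1\<^sub>m K) Y"
proof -
  have IY: "kron (1\<^sub>m L) Y \<in> carrier_mat (L * b) (L * b)" using kron_carrier_mat[OF one_carrier_mat Y] .
  have k: "K * b \<le> L * b" using KL by simp
  note z = upper_right_zero_kron[OF one_carrier_mat upper_right_zero_one[OF KL] Y]
  show "upper_right_zero (K * b) (K * b) (1\<^sub>m (L * b) - c \<cdot>\<^sub>m kron (1\<^sub>m L) Y)"
    by (rule upper_right_zero_diff[OF one_carrier_mat smult_carrier_mat[OF IY] upper_right_zero_one[OF k]
          upper_right_zero_smult[OF IY z k] k])
  have "leading_submat (K * b) (K * b) (1\<^sub>m (L * b) - c \<cdot>\<^sub>m kron (1\<^sub>m L) Y)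
      = 1\<^sub>m (K * b) - c \<cdot>\<^sub>m leading_submat (K * b) (K * b) (kron (1\<^sub>m L) Y)"
    by (simp only: leading_submat_diff[OF one_carrier_mat smult_carrier_mat[OF IY] k k]
          leading_submat_smult[OF IY k k] leading_submat_one[OF k])
  also have "leading_submat (K * b) (K * b) (kron (1\<^sub>m L) Y) = kron (1\<^sub>m K) Y"
    using leading_submat_kron[OF one_carrier_mat Y KL] by (simp add: leading_submat_one[OF KL])
  finally show "leading_submat (K * b) (K * b) (1\<^sub>m (L * b) - c \<cdot>\<^sub>m kron (1\<^sub>m L) Y) = 1\<^sub>m (K * b) - c \<cdot>\<^sub>m kron (1\<^sub>m K) Y" .
qed

lemma upper_right_zero_identity_minus_kron_shift:
  fixes Y Z :: "complex mat"
  assumes Y: "Y \<in> carrier_mat b b" and Z: "Z \<in> carrier_mat b b" and KL: "K \<le> L"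
  shows "upper_right_zero (K * b) (K * b) (1\<^sub>m (L * b) - c \<cdot>\<^sub>m kron (1\<^sub>m L) Y - kron (Esub L) Z)"
    "leading_submat (K * b) (K * b) (1\<^sub>m (L * b) - c \<cdot>\<^sub>m kron (1\<^sub>m L) Y - kron (Esub L) Z)
       = 1\<^sub>m (K * b) - c \<cdot>\<^sub>m kron (1\<^sub>m K) Y - kron (Esub K) Z"
proof -
  note I = upper_right_zero_identity_minus_kron[OF Y KL, of c]
  have U: "1\<^sub>m (L * b) - c \<cdot>\<^sub>m kron (1\<^sub>m L) Y \<in> carrier_mat (L * b) (L * b)"
    using kron_carrier_mat[OF one_carrier_mat Y, of L] by (intro minus_carrier_mat smult_carrier_mat)
  have EZ: "kron (Esub L) Z \<in> carrier_mat (L * b) (L * b)" using kron_carrier_mat[OF Esub_carrier_mat Z] .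
  have k: "K * b \<le> L * b" using KL by simp
  show "upper_right_zero (K * b) (K * b) (1\<^sub>m (L * b) - c \<cdot>\<^sub>m kron (1\<^sub>m L) Y - kron (Esub L) Z)"
    by (rule upper_right_zero_diff[OF U EZ I(1)
          upper_right_zero_kron[OF Esub_carrier_mat upper_right_zero_Esub Z] k])
  show "leading_submat (K * b) (K * b) (1\<^sub>m (L * b) - c \<cdot>\<^sub>m kron (1\<^sub>m L) Y - kron (Esub L) Z)
       = 1\<^sub>m (K * b) - c \<cdot>\<^sub>m kron (1\<^sub>m K) Y - kron (Esub K) Z"
    using leading_submat_diff[OF U EZ k k] I(2) leading_submat_kron[OF Esub_carrier_mat Z KL]
    by (simp add: leading_submat_Esub[OF KL])
qed

subsection \<open>Entrywise limits of matrix sequences\<close>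

definition mat_tendsto :: "(nat \<Rightarrow> complex mat) \<Rightarrow> complex mat \<Rightarrow> bool" where
  "mat_tendsto F G \<longleftrightarrow> eventually (\<lambda>L. F L \<in> carrier_mat (dim_row G) (dim_col G)) sequentially \<and>
     (\<forall>i<dim_row G. \<forall>j<dim_col G. ((\<lambda>L. F L $$ (i,j)) \<longlongrightarrow> G $$ (i,j)) sequentially)"

lemma mat_tendstoD:
  "mat_tendsto F G \<Longrightarrow> eventually (\<lambda>L. F L \<in> carrier_mat (dim_row G) (dim_col G)) sequentially"
  "mat_tendsto F G \<Longrightarrow> i < dim_row G \<Longrightarrow> j < dim_col G \<Longrightarrow> ((\<lambda>L. F L $$ (i,j)) \<longlongrightarrow> G $$ (i,j)) sequentially"
  unfolding mat_tendsto_def by auto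

lemma mat_tendstoI:
  assumes "eventually (\<lambda>L. F L \<in> carrier_mat (dim_row G) (dim_col G)) sequentially"
    and "\<And>i j. i < dim_row G \<Longrightarrow> j < dim_col G \<Longrightarrow> eventually (\<lambda>L. F L $$ (i,j) = f i j L) sequentially"
    and "\<And>i j. i < dim_row G \<Longrightarrow> j < dim_col G \<Longrightarrow> (f i j \<longlongrightarrow> G $$ (i,j)) sequentially"
  shows "mat_tendsto F G"
  unfolding mat_tendsto_def
proof (intro conjI allI impI)
  fix i j assume ij: "i < dim_row G" "j < dim_col G"
  have "eventually (\<lambda>L. f i j L = F L $$ (i,j)) sequentially"
    using assms(2)[OF ij] by (auto elim: eventually_mono)
  with assms(3)[OF ij] show "((\<lambda>L. F L $$ (i,j)) \<longlongrightarrow> G $$ (i,j)) sequentially"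
    by (rule Lim_transform_eventually)
qed (rule assms(1))

lemma mat_tendsto_cong:
  assumes F: "mat_tendsto F G" and eq: "eventually (\<lambda>L. F L = F' L) sequentially"
  shows "mat_tendsto F' G"
proof (rule mat_tendstoI[where f = "\<lambda>i j L. F L $$ (i,j)"])
  show "eventually (\<lambda>L. F' L \<in> carrier_mat (dim_row G) (dim_col G)) sequentially"
    using eventually_conj[OF mat_tendstoD(1)[OF F] eq] by (rule eventually_mono) auto
  fix i j assume ij: "i < dim_row G" "j < dim_col G"
  show "eventually (\<lambda>L. F' L $$ (i,j) = F L $$ (i,j)) sequentially"
    using eq by (rule eventually_mono) simp
  show "((\<lambda>L. F L $$ (i,j)) \<longlongrightarrow> G $$ (i,j)) sequentially" by (rule mat_tendstoD(2)[OF F ij])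
qed

lemma mat_tendsto_const: "mat_tendsto (\<lambda>_. G) G"
  unfolding mat_tendsto_def by auto

lemma mat_tendsto_diff:
  assumes F: "mat_tendsto F G" and F': "mat_tendsto F' G'" and G: "G \<in> carrier_mat n m" and G': "G' \<in> carrier_mat n m"
  shows "mat_tendsto (\<lambda>L. F L - F' L) (G - G')"
proof (rule mat_tendstoI[where f = "\<lambda>i j L. F L $$ (i,j) - F' L $$ (i,j)"])
  have ev: "eventually (\<lambda>L. F L \<in> carrier_mat n m \<and> F' L \<in> carrier_mat n m) sequentially"
    using eventually_conj[OF mat_tendstoD(1)[OF F] mat_tendstoD(1)[OF F']] G G' by simp
  thus "eventually (\<lambda>L. F L - F' L \<in> carrier_mat (dim_row (G - G')) (dim_col (G - G'))) sequentially"
    by (rule eventually_mono) (use G' in \<open>auto intro: minus_carrier_mat\<close>)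
  fix i j assume "i < dim_row (G - G')" "j < dim_col (G - G')"
  hence ij: "i < n" "j < m" using G' by auto
  show "eventually (\<lambda>L. (F L - F' L) $$ (i,j) = F L $$ (i,j) - F' L $$ (i,j)) sequentially"
    using ev by (rule eventually_mono) (use ij in auto)
  have "((\<lambda>L. F L $$ (i,j) - F' L $$ (i,j)) \<longlongrightarrow> G $$ (i,j) - G' $$ (i,j)) sequentially"
    using ij G G' by (intro tendsto_diff mat_tendstoD(2)[OF F] mat_tendstoD(2)[OF F']) auto
  thus "((\<lambda>L. F L $$ (i,j) - F' L $$ (i,j)) \<longlongrightarrow> (G - G') $$ (i,j)) sequentially"
    using ij G G' by simp
qed

lemma mat_tendsto_smult:
  assumes F: "mat_tendsto F G" and a: "(a \<longlongrightarrow> a0) sequentially"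
  shows "mat_tendsto (\<lambda>L. a L \<cdot>\<^sub>m F L) (a0 \<cdot>\<^sub>m G)"
proof (rule mat_tendstoI[where f = "\<lambda>i j L. a L * F L $$ (i,j)"])
  show "eventually (\<lambda>L. a L \<cdot>\<^sub>m F L \<in> carrier_mat (dim_row (a0 \<cdot>\<^sub>m G)) (dim_col (a0 \<cdot>\<^sub>m G))) sequentially"
    using mat_tendstoD(1)[OF F] by (rule eventually_mono) simp
  fix i j assume "i < dim_row (a0 \<cdot>\<^sub>m G)" "j < dim_col (a0 \<cdot>\<^sub>m G)"
  hence ij: "i < dim_row G" "j < dim_col G" by auto
  show "eventually (\<lambda>L. (a L \<cdot>\<^sub>m F L) $$ (i,j) = a L * F L $$ (i,j)) sequentially"
    using mat_tendstoD(1)[OF F] by (rule eventually_mono) (use ij in auto)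
  show "((\<lambda>L. a L * F L $$ (i,j)) \<longlongrightarrow> (a0 \<cdot>\<^sub>m G) $$ (i,j)) sequentially"
    using tendsto_mult[OF a mat_tendstoD(2)[OF F ij]] ij by simp
qed

lemma mat_tendsto_mult:
  assumes F: "mat_tendsto F G" and F': "mat_tendsto F' G'" and G: "G \<in> carrier_mat n k" and G': "G' \<in> carrier_mat k m"
  shows "mat_tendsto (\<lambda>L. F L * F' L) (G * G')"
proof (rule mat_tendstoI[where f = "\<lambda>i j L. \<Sum>l<k. F L $$ (i,l) * F' L $$ (l,j)"])
  have ev: "eventually (\<lambda>L. F L \<in> carrier_mat n k \<and> F' L \<in> carrier_mat k m) sequentially"
    using eventually_conj[OF mat_tendstoD(1)[OF F] mat_tendstoD(1)[OF F']] G G' by simp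
  thus "eventually (\<lambda>L. F L * F' L \<in> carrier_mat (dim_row (G * G')) (dim_col (G * G'))) sequentially"
    by (rule eventually_mono) (use G G' in auto)
  fix i j assume "i < dim_row (G * G')" "j < dim_col (G * G')"
  hence ij: "i < n" "j < m" using G G' by auto
  show "eventually (\<lambda>L. (F L * F' L) $$ (i,j) = (\<Sum>l<k. F L $$ (i,l) * F' L $$ (l,j))) sequentially"
    using ev by (rule eventually_mono) (use ij in \<open>auto simp: scalar_prod_def lessThan_atLeast0 intro!: sum.cong\<close>)
  have "((\<lambda>L. \<Sum>l<k. F L $$ (i,l) * F' L $$ (l,j)) \<longlongrightarrow> (\<Sum>l<k. G $$ (i,l) * G' $$ (l,j))) sequentially"
    using ij G G' by (intro tendsto_sum tendsto_mult mat_tendstoD(2)[OF F] mat_tendstoD(2)[OF F']) auto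
  also have "(\<Sum>l<k. G $$ (i,l) * G' $$ (l,j)) = (G * G') $$ (i,j)"
    using ij G G' by (auto simp: scalar_prod_def lessThan_atLeast0 intro!: sum.cong)
  finally show "((\<lambda>L. \<Sum>l<k. F L $$ (i,l) * F' L $$ (l,j)) \<longlongrightarrow> (G * G') $$ (i,j)) sequentially" .
qed

lemma tendsto_det:
  assumes F: "mat_tendsto F G" and G: "G \<in> carrier_mat n n"
  shows "((\<lambda>L. det (F L)) \<longlongrightarrow> det G) sequentially"
proof -
  have "((\<lambda>L. \<Sum>p \<in> {p. p permutes {0..<n}}. signof p * (\<Prod>i = 0..<n. F L $$ (i, p i))) \<longlongrightarrow>
        (\<Sum>p \<in> {p. p permutes {0..<n}}. signof p * (\<Prod>i = 0..<n. G $$ (i, p i)))) sequentially"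
  proof (intro tendsto_sum tendsto_mult tendsto_const tendsto_prod)
    fix p i assume "p \<in> {p. p permutes {0..<n}}" and i: "i \<in> {0..<n}"
    hence "p i < n" by (auto simp: permutes_in_image)
    thus "((\<lambda>L. F L $$ (i, p i)) \<longlongrightarrow> G $$ (i, p i)) sequentially"
      using mat_tendstoD(2)[OF F] i G by auto
  qed
  thus ?thesis
    using mat_tendstoD(1)[OF F] G by (auto simp: det_def' elim!: Lim_transform_eventually elim: eventually_mono)
qed

lemma mat_tendsto_mat_delete:
  assumes F: "mat_tendsto F G"
  shows "mat_tendsto (\<lambda>L. mat_delete (F L) a b) (mat_delete G a b)"
proof (rule mat_tendstoI[where f = "\<lambda>i j L. F L $$ (if i < a then i else Suc i, if j < b then j else Suc j)"])
  show "eventually (\<lambda>L. mat_delete (F L) a b \<in> carrier_mat (dim_row (mat_delete G a b)) (dim_col (mat_delete G a b))) sequentially"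
    using mat_tendstoD(1)[OF F] by (rule eventually_mono) (simp add: mat_delete_def)
  fix i j assume ij: "i < dim_row (mat_delete G a b)" "j < dim_col (mat_delete G a b)"
  show "eventually (\<lambda>L. mat_delete (F L) a b $$ (i,j) = F L $$ (if i < a then i else Suc i, if j < b then j else Suc j)) sequentially"
    using mat_tendstoD(1)[OF F] by (rule eventually_mono) (use ij in \<open>auto simp: mat_delete_def\<close>)
  show "((\<lambda>L. F L $$ (if i < a then i else Suc i, if j < b then j else Suc j)) \<longlongrightarrow> mat_delete G a b $$ (i,j)) sequentially"
    using mat_tendstoD(2)[OF F] ij by (auto simp: mat_delete_def)
qed

lemma mat_tendsto_adj_mat:
  assumes F: "mat_tendsto F G" and G: "G \<in> carrier_mat n n"
  shows "mat_tendsto (\<lambda>L. adj_mat (F L)) (adj_mat G)"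
proof (rule mat_tendstoI[where f = "\<lambda>i j L. (-1) ^ (j + i) * det (mat_delete (F L) j i)"])
  have ev: "eventually (\<lambda>L. F L \<in> carrier_mat n n) sequentially" using mat_tendstoD(1)[OF F] G by simp
  thus "eventually (\<lambda>L. adj_mat (F L) \<in> carrier_mat (dim_row (adj_mat G)) (dim_col (adj_mat G))) sequentially"
    by (rule eventually_mono) (use G in \<open>simp add: adj_mat_def\<close>)
  fix i j assume "i < dim_row (adj_mat G)" "j < dim_col (adj_mat G)"
  hence ij: "i < n" "j < n" using G by (auto simp: adj_mat_def)
  show "eventually (\<lambda>L. adj_mat (F L) $$ (i,j) = (-1) ^ (j + i) * det (mat_delete (F L) j i)) sequentially"
    using ev by (rule eventually_mono) (use ij in \<open>auto simp: adj_mat_def cofactor_def\<close>)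
  have "((\<lambda>L. (-1) ^ (j + i) * det (mat_delete (F L) j i)) \<longlongrightarrow> (-1) ^ (j + i) * det (mat_delete G j i)) sequentially"
    by (intro tendsto_mult tendsto_const tendsto_det[OF mat_tendsto_mat_delete[OF F] mat_delete_carrier[OF G]])
  thus "((\<lambda>L. (-1) ^ (j + i) * det (mat_delete (F L) j i)) \<longlongrightarrow> adj_mat G $$ (i,j)) sequentially"
    using ij G by (auto simp: adj_mat_def cofactor_def)
qed

lemma mat_tendsto_minv:
  assumes F: "mat_tendsto F G" and G: "G \<in> carrier_mat n n" and d: "det G \<noteq> 0"
  shows "mat_tendsto (\<lambda>L. minv (F L)) (minv G)"
proof -
  have ev: "eventually (\<lambda>L. F L \<in> carrier_mat n n) sequentially" using mat_tendstoD(1)[OF F] G by auto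
  have dt: "((\<lambda>L. det (F L)) \<longlongrightarrow> det G) sequentially" by (rule tendsto_det[OF F G])
  have ev2: "eventually (\<lambda>L. det (F L) \<noteq> 0) sequentially" by (rule tendsto_imp_eventually_ne[OF dt d])
  have "mat_tendsto (\<lambda>L. (1 / det (F L)) \<cdot>\<^sub>m adj_mat (F L)) (minv G)"
    unfolding minv_adj_mat[OF G d]
    by (intro mat_tendsto_smult mat_tendsto_adj_mat[OF F G] tendsto_divide tendsto_const dt d)
  thus ?thesis
    by (rule mat_tendsto_cong) (use eventually_conj[OF ev ev2] in \<open>auto elim!: eventually_mono simp: minv_adj_mat\<close>)
qed

lemma mat_tendsto_identity_minus_smult:
  assumes mu: "(mu \<longlongrightarrow> 0) sequentially" and Y: "Y \<in> carrier_mat n n"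
  shows "mat_tendsto (\<lambda>L. 1\<^sub>m n - complex_of_real (mu L) \<cdot>\<^sub>m Y) (1\<^sub>m n - complex_of_real 0 \<cdot>\<^sub>m Y)"
  by (rule mat_tendsto_diff[OF mat_tendsto_const mat_tendsto_smult[OF mat_tendsto_const tendsto_of_real[OF mu]]])
    (use Y in auto)

lemma tendsto_const_over_nat:
  assumes "\<And>L. 0 < L \<Longrightarrow> mu L = c / real L"
  shows "(mu \<longlongrightarrow> 0) sequentially"
proof (rule Lim_transform_eventually[OF lim_const_over_n[of c]])
  show "eventually (\<lambda>L. c / real L = mu L) sequentially"
    using assms unfolding eventually_sequentially by (intro exI[of _ 1]) auto
qed

subsection \<open>Block sparsity patterns\<close>

definition block_subdiagonal :: "nat \<Rightarrow> nat \<Rightarrow> 'a::zero mat \<Rightarrow> bool" where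
  "block_subdiagonal br bc X \<longleftrightarrow> (\<forall>i<dim_row X. \<forall>j<dim_col X. X $$ (i,j) \<noteq> 0 \<longrightarrow> i div br = j div bc + 1)"

definition block_diagonal :: "nat \<Rightarrow> nat \<Rightarrow> 'a::zero mat \<Rightarrow> bool" where
  "block_diagonal br bc X \<longleftrightarrow> (\<forall>i<dim_row X. \<forall>j<dim_col X. X $$ (i,j) \<noteq> 0 \<longrightarrow> i div br = j div bc)"

lemma block_subdiagonal_kron_Esub: "(Y :: complex mat) \<in> carrier_mat r c \<Longrightarrow> block_subdiagonal r c (kron (Esub K) Y)"
  by (auto simp: block_subdiagonal_def Esub_def less_mult_imp_div_less split: if_splits)

lemma block_diagonal_kron_one: "(Y :: 'a::comm_ring_1 mat) \<in> carrier_mat r c \<Longrightarrow> block_diagonal r c (kron (1\<^sub>m K) Y)"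
  by (auto simp: block_diagonal_def less_mult_imp_div_less split: if_splits)

lemma block_diagonal_one: "block_diagonal b b (1\<^sub>m n)"
  by (simp add: block_diagonal_def)

lemma block_diagonal_diff:
  fixes A B :: "'a::ab_group_add mat"
  assumes A: "A \<in> carrier_mat n m" and B: "B \<in> carrier_mat n m"
    and dA: "block_diagonal b c A" and dB: "block_diagonal b c B"
  shows "block_diagonal b c (A - B)"
  unfolding block_diagonal_def
proof (intro allI impI)
  fix i j assume i: "i < dim_row (A - B)" and j: "j < dim_col (A - B)" and nz: "(A - B) $$ (i,j) \<noteq> 0"
  hence "A $$ (i,j) \<noteq> 0 \<or> B $$ (i,j) \<noteq> 0" using A B by auto
  thus "i div b = j div c" using dA dB A B i j unfolding block_diagonal_def by auto
qed

lemma nonzero_index_mult_mat: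
  fixes A B :: "'a::comm_semiring_0 mat"
  assumes A: "A \<in> carrier_mat n1 n2" and B: "B \<in> carrier_mat n2 n3" and i: "i < n1" and j: "j < n3"
    and nz: "(A * B) $$ (i,j) \<noteq> 0"
  obtains l where "l < n2" "A $$ (i,l) \<noteq> 0" "B $$ (l,j) \<noteq> 0"
proof -
  have "(A * B) $$ (i,j) = (\<Sum>l<n2. A $$ (i,l) * B $$ (l,j))"
    using A B i j by (auto simp: scalar_prod_def lessThan_atLeast0 intro!: sum.cong)
  with nz obtain l where l: "l < n2" and p: "A $$ (i,l) * B $$ (l,j) \<noteq> 0"
    by (metis (no_types, lifting) lessThan_iff sum.neutral)
  from p have "A $$ (i,l) \<noteq> 0" "B $$ (l,j) \<noteq> 0" by auto
  with l show ?thesis by (rule that)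
qed

lemma block_diagonal_mult:
  fixes A B :: "'a::comm_semiring_0 mat"
  assumes A: "A \<in> carrier_mat n1 n2" and B: "B \<in> carrier_mat n2 n3"
    and dA: "block_diagonal b1 b2 A" and dB: "block_diagonal b2 b3 B"
  shows "block_diagonal b1 b3 (A * B)"
  unfolding block_diagonal_def
proof (intro allI impI)
  fix i j assume i: "i < dim_row (A * B)" and j: "j < dim_col (A * B)" and nz: "(A * B) $$ (i,j) \<noteq> 0"
  obtain l where "l < n2" "A $$ (i,l) \<noteq> 0" "B $$ (l,j) \<noteq> 0"
    using nonzero_index_mult_mat[OF A B _ _ nz] i j A B by auto
  thus "i div b1 = j div b3" using dA dB A B i j unfolding block_diagonal_def by auto
qed

lemma block_subdiagonal_mult:
  fixes A B :: "'a::comm_semiring_0 mat"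
  assumes A: "A \<in> carrier_mat n1 n2" and B: "B \<in> carrier_mat n2 n3"
    and sA: "block_subdiagonal b1 b2 A" and dB: "block_diagonal b2 b3 B"
  shows "block_subdiagonal b1 b3 (A * B)"
  unfolding block_subdiagonal_def
proof (intro allI impI)
  fix i j assume i: "i < dim_row (A * B)" and j: "j < dim_col (A * B)" and nz: "(A * B) $$ (i,j) \<noteq> 0"
  obtain l where "l < n2" "A $$ (i,l) \<noteq> 0" "B $$ (l,j) \<noteq> 0"
    using nonzero_index_mult_mat[OF A B _ _ nz] i j A B by auto
  thus "i div b1 = j div b3 + 1" using sA dB A B i j unfolding block_subdiagonal_def block_diagonal_def by auto
qed

lemma block_subdiagonal_strictly_lower:
  assumes "block_subdiagonal b b X" "X \<in> carrier_mat n n" "i < n" "j < n" "X $$ (i,j) \<noteq> 0"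
  shows "j < i"
proof (rule ccontr)
  have "i div b = j div b + 1" using assms unfolding block_subdiagonal_def by auto
  moreover assume "\<not> j < i"
  hence "i div b \<le> j div b" by (simp add: div_le_mono)
  ultimately show False by simp
qed

lemma blk_block_subdiagonal:
  assumes X: "X \<in> carrier_mat (K * b) (K * b)" and sX: "block_subdiagonal b b X"
    and i: "i < K" and j: "j < K" and ij: "i \<noteq> j + 1"
  shows "blk b X i j = 0\<^sub>m b b"
proof (rule eq_matI)
  fix r s assume "r < dim_row (0\<^sub>m b b :: 'a mat)" "s < dim_col (0\<^sub>m b b :: 'a mat)"
  hence r: "r < b" and s: "s < b" by auto
  have row: "i * b + r < K * b" and col: "j * b + s < K * b"
  proof -
    have "i * b + r < Suc i * b" "j * b + s < Suc j * b" using r s by simp_all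
    moreover have "Suc i * b \<le> K * b" "Suc j * b \<le> K * b" using i j by (intro mult_le_mono1; simp)+
    ultimately show "i * b + r < K * b" "j * b + s < K * b" by linarith+
  qed
  have "(i * b + r) div b = i" "(j * b + s) div b = j" using r s by simp_all
  hence "X $$ (i * b + r, j * b + s) = 0"
    using sX row col X ij unfolding block_subdiagonal_def by force
  thus "blk b X i j $$ (r,s) = 0\<^sub>m b b $$ (r,s)" using r s by (simp add: blk_def)
qed (simp_all add: blk_def)

lemma Esub_mult_unit_vec:
  assumes "Suc j < n"
  shows "Esub n *\<^sub>v unit_vec n j = unit_vec n (Suc j)"
proof (rule eq_vecI)
  fix i assume "i < dim_vec (unit_vec n (Suc j))"
  hence i: "i < n" by simp
  have "(Esub n *\<^sub>v unit_vec n j) $ i = (\<Sum>k<n. Esub n $$ (i,k) * unit_vec n j $ k)"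
    using i by (intro index_mult_mat_vec_sum) auto
  also have "\<dots> = (\<Sum>k<n. if k = j then Esub n $$ (i,k) else 0)"
    using assms by (intro sum.cong) auto
  also have "\<dots> = unit_vec n (Suc j) $ i"
    using assms i by (simp add: Esub_def)
  finally show "(Esub n *\<^sub>v unit_vec n j) $ i = unit_vec n (Suc j) $ i" .
qed simp

lemma Nlast_mult_const_vec:
  assumes "0 < m"
  shows "Nlast m *\<^sub>v vec m (\<lambda>_. c) = vec m (\<lambda>_. c)"
proof (rule eq_vecI)
  fix i assume "i < dim_vec (vec m (\<lambda>_. c))"
  hence i: "i < m" by simp
  have "(Nlast m *\<^sub>v vec m (\<lambda>_. c)) $ i = (\<Sum>k<m. Nlast m $$ (i,k) * c)"
    using i by (subst index_mult_mat_vec_sum) auto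
  also have "\<dots> = (\<Sum>k<m. if k = m - 1 then c else 0)"
    using i by (intro sum.cong) (auto simp: Nlast_def)
  also have "\<dots> = c" using assms by simp
  finally show "(Nlast m *\<^sub>v vec m (\<lambda>_. c)) $ i = vec m (\<lambda>_. c) $ i" using i by simp
qed simp

subsection \<open>Infinite block Toeplitz limits\<close>

lemma toeplitz_limit_blocks_eq:
  fixes X :: "nat \<Rightarrow> complex mat" and F :: "nat \<Rightarrow> nat \<Rightarrow> complex mat" and G :: "nat \<Rightarrow> complex mat"
  assumes lead: "\<And>K L. 0 < K \<Longrightarrow> K \<le> L \<Longrightarrow>
      upper_right_zero (K * b) (K * b) (X L) \<and> leading_submat (K * b) (K * b) (X L) = F K L"
    and dim: "\<And>L. 0 < L \<Longrightarrow> dim_col (X L) = L * b"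
    and lim: "\<And>K. 0 < K \<Longrightarrow> mat_tendsto (F K) (G K)"
    and G: "\<And>K. G K \<in> carrier_mat (K * b) (K * b)"
  shows "toeplitz_limit_blocks b X k = (if k < 0 then 0\<^sub>m b b else blk b (G (nat k + 1)) (nat k) 0)"
proof (rule eq_matI)
  fix r s assume "r < dim_row (if k < 0 then 0\<^sub>m b b else blk b (G (nat k + 1)) (nat k) 0)"
    and "s < dim_col (if k < 0 then 0\<^sub>m b b else blk b (G (nat k + 1)) (nat k) 0)"
  hence r: "r < b" and s: "s < b" by (auto simp: blk_def split: if_splits)
  show "toeplitz_limit_blocks b X k $$ (r,s) = (if k < 0 then 0\<^sub>m b b else blk b (G (nat k + 1)) (nat k) 0) $$ (r,s)"
  proof (cases "k < 0")
    case True
    define j where "j = nat (- k)"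
    have j: "1 \<le> j" using True by (simp add: j_def)
    have "eventually (\<lambda>L. blk b (X L) 0 j $$ (r,s) = 0) sequentially"
      unfolding eventually_sequentially
    proof (intro exI[of _ "j + 1"] allI impI)
      fix L assume L: "j + 1 \<le> L"
      have "b \<le> j * b" using mult_le_mono1[OF j, of b] by (simp only: mult_1)
      hence "b \<le> j * b + s" by linarith
      moreover have "j * b + s < dim_col (X L)"
      proof -
        have "j * b + s < (j + 1) * b" using s by simp
        also have "\<dots> \<le> L * b" using L by (rule mult_le_mono1)
        finally show ?thesis using dim[of L] L by simp
      qed
      ultimately show "blk b (X L) 0 j $$ (r,s) = 0"
        using lead[of 1 L] L r s unfolding upper_right_zero_def by (simp add: blk_def)
    qed
    hence "lim (\<lambda>L. blk b (X L) 0 j $$ (r,s)) = 0" by (rule limI[OF tendsto_eventually])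
    thus ?thesis using True r s by (simp add: toeplitz_limit_blocks_def j_def)
  next
    case False
    define K where "K = nat k + 1"
    have i: "nat k * b + r < K * b" and s': "s < K * b"
      using r s by (simp_all add: K_def algebra_simps trans_less_add2)
    have "((\<lambda>L. F K L $$ (nat k * b + r, s)) \<longlongrightarrow> G K $$ (nat k * b + r, s)) sequentially"
      using mat_tendstoD(2)[OF lim[of K], of "nat k * b + r" s] i s' G[of K] by (simp add: K_def)
    moreover have "eventually (\<lambda>L. F K L $$ (nat k * b + r, s) = blk b (X L) (nat k) 0 $$ (r,s)) sequentially"
      unfolding eventually_sequentially
    proof (intro exI[of _ K] allI impI)
      fix L assume "K \<le> L"
      hence "F K L $$ (nat k * b + r, s) = leading_submat (K * b) (K * b) (X L) $$ (nat k * b + r, s)"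
        using lead[of K L] by (simp add: K_def)
      also have "\<dots> = blk b (X L) (nat k) 0 $$ (r,s)"
        using i s' r s by (simp add: blk_def)
      finally show "F K L $$ (nat k * b + r, s) = blk b (X L) (nat k) 0 $$ (r,s)" .
    qed
    ultimately have "((\<lambda>L. blk b (X L) (nat k) 0 $$ (r,s)) \<longlongrightarrow> G K $$ (nat k * b + r, s)) sequentially"
      by (rule Lim_transform_eventually)
    thus ?thesis using False r s by (simp add: toeplitz_limit_blocks_def blk_def K_def limI)
  qed
qed (auto simp: toeplitz_limit_blocks_def blk_def)

lemma toeplitz_symbol_single_block:
  assumes zero: "\<And>k. k \<noteq> 1 \<Longrightarrow> B k = 0\<^sub>m b b" and B1: "B 1 \<in> carrier_mat b b"
  shows "toeplitz_symbol b B x = cis x \<cdot>\<^sub>m B 1"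
proof (rule eq_matI)
  fix r s assume "r < dim_row (cis x \<cdot>\<^sub>m B 1)" and "s < dim_col (cis x \<cdot>\<^sub>m B 1)"
  hence r: "r < b" and s: "s < b" using B1 by auto
  define f where "f = (\<lambda>k::int. B k $$ (r,s) * cis (real_of_int k * x))"
  have "infsum f UNIV = infsum f {1}"
    using zero r s by (intro infsum_cong_neutral) (auto simp: f_def)
  thus "toeplitz_symbol b B x $$ (r,s) = (cis x \<cdot>\<^sub>m B 1) $$ (r,s)"
    using r s B1 by (simp add: toeplitz_symbol_def f_def mult.commute)
qed (use B1 in \<open>auto simp: toeplitz_symbol_def\<close>)

lemma norm_eigenvalue_le_spectral_radius:
  assumes A: "A \<in> carrier_mat n n" and v: "v \<in> carrier_vec n" "v \<noteq> 0\<^sub>v n" and Av: "A *\<^sub>v v = c \<cdot>\<^sub>v v"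
  shows "norm c \<le> spectral_radius A"
proof -
  have "0 < n" using v by (cases n) auto
  moreover have "c \<in> spectrum A"
    using A v Av unfolding spectrum_def eigenvalue_def eigenvector_def by auto
  ultimately show ?thesis using spectral_radius_mem_max(2)[OF A] by blast
qed

lemma one_le_toeplitz_spectral_radius:
  assumes "\<And>x. 1 \<le> spectral_radius (toeplitz_symbol b B x)"
  shows "1 \<le> toeplitz_spectral_radius b B"
proof -
  let ?M = "restrict_space lborel {-pi..pi}"
  have "emeasure ?M (space ?M) = emeasure lborel {-pi..pi}"
    by (simp add: emeasure_restrict_space)
  hence "emeasure ?M (space ?M) \<noteq> 0" by simp
  hence "esssup ?M (\<lambda>x. ereal 1) = 1" by (simp add: esssup_const)
  moreover have "esssup ?M (\<lambda>x. ereal 1) \<le> esssup ?M (\<lambda>x. ereal (spectral_radius (toeplitz_symbol b B x)))"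
    by (rule esssup_mono) (use assms in auto)
  ultimately show ?thesis unfolding toeplitz_spectral_radius_def by simp
qed

subsection \<open>The PFASST iteration\<close>

locale pfasst_operators =
  fixes M N Mt Nt :: nat
    and Q QD QtD TFQ TCQ TFA TCA :: "real mat"
    and A At :: "complex mat"
  assumes Q: "Q \<in> carrier_mat M M" and QD: "QD \<in> carrier_mat M M" and QtD: "QtD \<in> carrier_mat Mt Mt"
    and TFQ: "TFQ \<in> carrier_mat Mt M" and TCQ: "TCQ \<in> carrier_mat M Mt"
    and TFA: "TFA \<in> carrier_mat Nt N" and TCA: "TCA \<in> carrier_mat N Nt"
    and A: "A \<in> carrier_mat N N" and At: "At \<in> carrier_mat Nt Nt"
begin

abbreviation iteration :: "nat \<Rightarrow> real \<Rightarrow> complex mat" where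
  "iteration L m \<equiv> T_S L M N Q QD A m * T_CGC L M N Mt Nt Q A QtD At TFQ TCQ TFA TCA m"

abbreviation fine_shift :: "nat \<Rightarrow> complex mat" where
  "fine_shift L \<equiv> kron (Esub L) (kron (Nlast M) (1\<^sub>m N))"

abbreviation coarse_shift :: "nat \<Rightarrow> complex mat" where
  "coarse_shift L \<equiv> kron (Esub L) (kron (Nlast Mt) (1\<^sub>m Nt))"

abbreviation restriction :: "nat \<Rightarrow> complex mat" where
  "restriction L \<equiv> kron (1\<^sub>m L) (kron (cmat TFQ) (cmat TFA))"

abbreviation interpolation :: "nat \<Rightarrow> complex mat" where
  "interpolation L \<equiv> kron (1\<^sub>m L) (kron (cmat TCQ) (cmat TCA))"

abbreviation limit_iteration :: "nat \<Rightarrow> complex mat" where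
  "limit_iteration L \<equiv> fine_shift L * (1\<^sub>m (L * M * N) - interpolation L * restriction L)"

lemma fine_shift_carrier_mat: "fine_shift L \<in> carrier_mat (L * M * N) (L * M * N)"
  and coarse_shift_carrier_mat: "coarse_shift L \<in> carrier_mat (L * Mt * Nt) (L * Mt * Nt)"
  and restriction_carrier_mat: "restriction L \<in> carrier_mat (L * Mt * Nt) (L * M * N)"
  and interpolation_carrier_mat: "interpolation L \<in> carrier_mat (L * M * N) (L * Mt * Nt)"
  using TFQ TFA TCQ TCA by (auto intro!: kron3_carrier_mat)

lemma limit_iteration_carrier_mat: "limit_iteration L \<in> carrier_mat (L * M * N) (L * M * N)"
  using mult_carrier_mat[OF interpolation_carrier_mat restriction_carrier_mat, of L]
  by (intro mult_carrier_mat[OF fine_shift_carrier_mat] minus_carrier_mat)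

lemma Cmat_zero: "Cmat L M N Q A 0 = 1\<^sub>m (L * M * N) - fine_shift L"
  unfolding Cmat_def using Q A by (intro eq_matI) (auto simp: mult.assoc)

lemma Phat_zero: "Phat L M N QD A 0 = 1\<^sub>m (L * M * N)"
  unfolding Phat_def using QD A by (intro eq_matI) (auto simp: mult.assoc)

lemma Ptilde_zero: "Ptilde L Mt Nt QtD At 0 = 1\<^sub>m (L * Mt * Nt) - coarse_shift L"
  unfolding Ptilde_def using QtD At by (intro eq_matI) (auto simp: mult.assoc)

lemma det_Ptilde_zero: "det (Ptilde L Mt Nt QtD At 0) = 1"
  unfolding Ptilde_zero
proof (rule det_one_minus_strictly_lower[OF coarse_shift_carrier_mat])
  have "block_subdiagonal (Mt * Nt) (Mt * Nt) (coarse_shift L)"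
    by (rule block_subdiagonal_kron_Esub) auto
  thus "\<And>i j. i < L * Mt * Nt \<Longrightarrow> j < L * Mt * Nt \<Longrightarrow> coarse_shift L $$ (i,j) \<noteq> 0 \<Longrightarrow> j < i"
    using block_subdiagonal_strictly_lower coarse_shift_carrier_mat by blast
qed

lemma coarse_correction_at_zero:
  assumes comm: "coarse_shift L * restriction L = restriction L * fine_shift L"
  shows "interpolation L * minv (Ptilde L Mt Nt QtD At 0) * restriction L * Cmat L M N Q A 0
    = interpolation L * restriction L"
proof -
  let ?n = "L * M * N" and ?nt = "L * Mt * Nt"
  let ?S = "fine_shift L" and ?St = "coarse_shift L" and ?P = "interpolation L" and ?R = "restriction L"
  note S = fine_shift_carrier_mat[of L] and St = coarse_shift_carrier_mat[of L]
    and P = interpolation_carrier_mat[of L] and R = restriction_carrier_mat[of L]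
  have Pt: "1\<^sub>m ?nt - ?St \<in> carrier_mat ?nt ?nt" using St by (rule minus_carrier_mat)
  have iPt: "minv (1\<^sub>m ?nt - ?St) \<in> carrier_mat ?nt ?nt" "minv (1\<^sub>m ?nt - ?St) * (1\<^sub>m ?nt - ?St) = 1\<^sub>m ?nt"
    using minv_inverse[OF Pt invertible_mat_if_det_nonzero[OF Pt]] det_Ptilde_zero[of L]
    unfolding Ptilde_zero by simp_all
  have RC: "?R * (1\<^sub>m ?n - ?S) = (1\<^sub>m ?nt - ?St) * ?R"
  proof -
    have "?R * (1\<^sub>m ?n - ?S) = ?R * 1\<^sub>m ?n - ?R * ?S" by (rule mult_minus_distrib_mat[OF R one_carrier_mat S])
    also have "\<dots> = 1\<^sub>m ?nt * ?R - ?St * ?R"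
      using comm by (simp add: right_mult_one_mat[OF R] left_mult_one_mat[OF R])
    also have "\<dots> = (1\<^sub>m ?nt - ?St) * ?R" by (rule minus_mult_distrib_mat[symmetric, OF one_carrier_mat St R])
    finally show ?thesis .
  qed
  \<comment> \<open>Restriction commutes with the shift, so the coarse solve undoes the coarse shift.\<close>
  have "?P * minv (1\<^sub>m ?nt - ?St) * ?R * (1\<^sub>m ?n - ?S) = (?P * minv (1\<^sub>m ?nt - ?St)) * ((1\<^sub>m ?nt - ?St) * ?R)"
    unfolding RC[symmetric] by (rule assoc_mult_mat[OF mult_carrier_mat[OF P iPt(1)] R minus_carrier_mat[OF S]])
  also have "\<dots> = ?P * (minv (1\<^sub>m ?nt - ?St) * ((1\<^sub>m ?nt - ?St) * ?R))"
    by (rule assoc_mult_mat[OF P iPt(1) mult_carrier_mat[OF Pt R]])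
  also have "\<dots> = ?P * ((minv (1\<^sub>m ?nt - ?St) * (1\<^sub>m ?nt - ?St)) * ?R)"
    by (simp only: assoc_mult_mat[OF iPt(1) Pt R])
  also have "\<dots> = ?P * ?R" unfolding iPt(2) left_mult_one_mat[OF R] ..
  finally show ?thesis unfolding Ptilde_zero Cmat_zero .
qed

lemma iteration_at_zero:
  assumes "coarse_shift L * restriction L = restriction L * fine_shift L"
  shows "iteration L 0 = limit_iteration L"
proof -
  have "T_S L M N Q QD A 0 = fine_shift L"
    unfolding T_S_def Phat_zero Cmat_zero minv_eqI[OF one_carrier_mat one_carrier_mat left_mult_one_mat[OF one_carrier_mat]]
    using fine_shift_carrier_mat[of L] by (intro eq_matI) auto
  moreover have "T_CGC L M N Mt Nt Q A QtD At TFQ TCQ TFA TCA 0 = 1\<^sub>m (L * M * N) - interpolation L * restriction L"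
    unfolding T_CGC_def coarse_correction_at_zero[OF assms] ..
  ultimately show ?thesis by simp
qed

lemma operators_carrier_mat:
  "Cmat L M N Q A m \<in> carrier_mat (L * (M * N)) (L * (M * N))"
  "Phat L M N QD A m \<in> carrier_mat (L * (M * N)) (L * (M * N))"
  "Ptilde L Mt Nt QtD At m \<in> carrier_mat (L * (Mt * Nt)) (L * (Mt * Nt))"
  unfolding Cmat_def Phat_def Ptilde_def using Q QD QtD A At
  by (auto simp: mult.assoc intro!: minus_carrier_mat smult_carrier_mat kron3_carrier_mat)

lemma operators_leading_submat:
  assumes KL: "K \<le> L"
  shows "upper_right_zero (K * (M * N)) (K * (M * N)) (Cmat L M N Q A m)"
    "leading_submat (K * (M * N)) (K * (M * N)) (Cmat L M N Q A m) = Cmat K M N Q A m"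
    "upper_right_zero (K * (M * N)) (K * (M * N)) (Phat L M N QD A m)"
    "leading_submat (K * (M * N)) (K * (M * N)) (Phat L M N QD A m) = Phat K M N QD A m"
    "upper_right_zero (K * (Mt * Nt)) (K * (Mt * Nt)) (Ptilde L Mt Nt QtD At m)"
    "leading_submat (K * (Mt * Nt)) (K * (Mt * Nt)) (Ptilde L Mt Nt QtD At m) = Ptilde K Mt Nt QtD At m"
    "upper_right_zero (K * (M * N)) (K * (Mt * Nt)) (interpolation L)"
    "leading_submat (K * (M * N)) (K * (Mt * Nt)) (interpolation L) = interpolation K"
    "upper_right_zero (K * (Mt * Nt)) (K * (M * N)) (restriction L)"
    "leading_submat (K * (Mt * Nt)) (K * (M * N)) (restriction L) = restriction K"
proof -
  have QA: "kron (cmat Q) A \<in> carrier_mat (M * N) (M * N)" and QDA: "kron (cmat QD) A \<in> carrier_mat (M * N) (M * N)"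
    and QtDAt: "kron (cmat QtD) At \<in> carrier_mat (Mt * Nt) (Mt * Nt)"
    and NI: "kron (Nlast M) (1\<^sub>m N) \<in> carrier_mat (M * N) (M * N)"
    and NIt: "kron (Nlast Mt) (1\<^sub>m Nt) \<in> carrier_mat (Mt * Nt) (Mt * Nt)"
    and TC: "kron (cmat TCQ) (cmat TCA) \<in> carrier_mat (M * N) (Mt * Nt)"
    and TF: "kron (cmat TFQ) (cmat TFA) \<in> carrier_mat (Mt * Nt) (M * N)"
    using Q QD QtD A At TCQ TCA TFQ TFA by (auto intro!: kron_carrier_mat)
  have C: "Cmat J M N Q A m = 1\<^sub>m (J * (M * N)) - complex_of_real m \<cdot>\<^sub>m kron (1\<^sub>m J) (kron (cmat Q) A)
      - kron (Esub J) (kron (Nlast M) (1\<^sub>m N))" for J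
    unfolding Cmat_def by (simp add: mult.assoc)
  have Ph: "Phat J M N QD A m = 1\<^sub>m (J * (M * N)) - complex_of_real m \<cdot>\<^sub>m kron (1\<^sub>m J) (kron (cmat QD) A)" for J
    unfolding Phat_def by (simp add: mult.assoc)
  have Pt: "Ptilde J Mt Nt QtD At m = 1\<^sub>m (J * (Mt * Nt)) - complex_of_real m \<cdot>\<^sub>m kron (1\<^sub>m J) (kron (cmat QtD) At)
      - kron (Esub J) (kron (Nlast Mt) (1\<^sub>m Nt))" for J
    unfolding Ptilde_def by (simp add: mult.assoc)
  show "upper_right_zero (K * (M * N)) (K * (M * N)) (Cmat L M N Q A m)"
    "leading_submat (K * (M * N)) (K * (M * N)) (Cmat L M N Q A m) = Cmat K M N Q A m"
    by (rule upper_right_zero_identity_minus_kron_shift[OF QA NI KL, of "complex_of_real m", folded C])+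
  show "upper_right_zero (K * (M * N)) (K * (M * N)) (Phat L M N QD A m)"
    "leading_submat (K * (M * N)) (K * (M * N)) (Phat L M N QD A m) = Phat K M N QD A m"
    by (rule upper_right_zero_identity_minus_kron[OF QDA KL, of "complex_of_real m", folded Ph])+
  show "upper_right_zero (K * (Mt * Nt)) (K * (Mt * Nt)) (Ptilde L Mt Nt QtD At m)"
    "leading_submat (K * (Mt * Nt)) (K * (Mt * Nt)) (Ptilde L Mt Nt QtD At m) = Ptilde K Mt Nt QtD At m"
    by (rule upper_right_zero_identity_minus_kron_shift[OF QtDAt NIt KL, of "complex_of_real m", folded Pt])+
  show "upper_right_zero (K * (M * N)) (K * (Mt * Nt)) (interpolation L)"
    "upper_right_zero (K * (Mt * Nt)) (K * (M * N)) (restriction L)"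
    by (rule upper_right_zero_kron[OF one_carrier_mat upper_right_zero_one[OF KL]], fact)+
  show "leading_submat (K * (M * N)) (K * (Mt * Nt)) (interpolation L) = interpolation K"
    "leading_submat (K * (Mt * Nt)) (K * (M * N)) (restriction L) = restriction K"
    unfolding leading_submat_kron[OF one_carrier_mat TC KL] leading_submat_kron[OF one_carrier_mat TF KL]
      leading_submat_one[OF KL] by simp_all
qed

lemma iteration_leading_submat:
  assumes KL: "K \<le> L"
    and iPh: "invertible_mat (Phat L M N QD A m)" and iPt: "invertible_mat (Ptilde L Mt Nt QtD At m)"
  shows "upper_right_zero (K * (M * N)) (K * (M * N)) (iteration L m)"
    "leading_submat (K * (M * N)) (K * (M * N)) (iteration L m) = iteration K m"
    "dim_col (iteration L m) = L * (M * N)"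
proof -
  have iteration: "iteration J m = (1\<^sub>m (J * (M * N)) - minv (Phat J M N QD A m) * Cmat J M N Q A m) *
      (1\<^sub>m (J * (M * N)) - interpolation J * minv (Ptilde J Mt Nt QtD At m) * restriction J * Cmat J M N Q A m)" for J
    unfolding T_S_def T_CGC_def by (simp add: mult.assoc)
  note ops = operators_leading_submat[OF KL]
  have k: "K * (M * N) \<le> L * (M * N)" "K * (Mt * Nt) \<le> L * (Mt * Nt)" using KL by simp_all
  note G = two_grid_leading_submat[OF operators_carrier_mat interpolation_carrier_mat[of L, unfolded mult.assoc]
      restriction_carrier_mat[of L, unfolded mult.assoc] iPh iPt ops(1,3,5,7,9) k]
  show "upper_right_zero (K * (M * N)) (K * (M * N)) (iteration L m)"
    unfolding iteration by (rule G(1))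
  show "leading_submat (K * (M * N)) (K * (M * N)) (iteration L m) = iteration K m"
    unfolding iteration G(2) ops(2,4,6,8,10) ..
  show "dim_col (iteration L m) = L * (M * N)"
    unfolding T_CGC_def Cmat_def by (simp add: mult.assoc)
qed

lemma operators_tendsto:
  assumes mu: "(mu \<longlongrightarrow> 0) sequentially"
  shows "mat_tendsto (\<lambda>L'. Cmat L M N Q A (mu L')) (Cmat L M N Q A 0)"
    "mat_tendsto (\<lambda>L'. Phat L M N QD A (mu L')) (Phat L M N QD A 0)"
    "mat_tendsto (\<lambda>L'. Ptilde L Mt Nt QtD At (mu L')) (Ptilde L Mt Nt QtD At 0)"
proof -
  let ?n = "L * M * N" and ?nt = "L * Mt * Nt"
  have Y: "kron (1\<^sub>m L) (kron (cmat Q) A) \<in> carrier_mat ?n ?n"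
    "kron (1\<^sub>m L) (kron (cmat QD) A) \<in> carrier_mat ?n ?n"
    "kron (1\<^sub>m L) (kron (cmat QtD) At) \<in> carrier_mat ?nt ?nt"
    using Q QD QtD A At by (auto intro!: kron3_carrier_mat)
  show "mat_tendsto (\<lambda>L'. Cmat L M N Q A (mu L')) (Cmat L M N Q A 0)"
    unfolding Cmat_def using mat_tendsto_identity_minus_smult[OF mu Y(1)] Y(1)
    by (intro mat_tendsto_diff[OF _ mat_tendsto_const _ fine_shift_carrier_mat]) (auto intro!: minus_carrier_mat)
  show "mat_tendsto (\<lambda>L'. Phat L M N QD A (mu L')) (Phat L M N QD A 0)"
    unfolding Phat_def by (rule mat_tendsto_identity_minus_smult[OF mu Y(2)])
  show "mat_tendsto (\<lambda>L'. Ptilde L Mt Nt QtD At (mu L')) (Ptilde L Mt Nt QtD At 0)"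
    unfolding Ptilde_def using mat_tendsto_identity_minus_smult[OF mu Y(3)] Y(3)
    by (intro mat_tendsto_diff[OF _ mat_tendsto_const _ coarse_shift_carrier_mat]) (auto intro!: minus_carrier_mat)
qed

lemma iteration_tendsto:
  assumes mu: "(mu \<longlongrightarrow> 0) sequentially"
  shows "mat_tendsto (\<lambda>L'. iteration L (mu L')) (iteration L 0)"
proof -
  let ?n = "L * M * N" and ?nt = "L * Mt * Nt"
  note S = fine_shift_carrier_mat[of L] and St = coarse_shift_carrier_mat[of L]
    and P = interpolation_carrier_mat[of L] and R = restriction_carrier_mat[of L]
  note C = operators_tendsto(1)[OF mu, of L] and Ph = operators_tendsto(2)[OF mu, of L]
    and Pt = operators_tendsto(3)[OF mu, of L]
  have C0: "Cmat L M N Q A 0 \<in> carrier_mat ?n ?n" unfolding Cmat_zero using S by (rule minus_carrier_mat)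
  have Ph0: "Phat L M N QD A 0 \<in> carrier_mat ?n ?n" unfolding Phat_zero by simp
  have Pt0: "Ptilde L Mt Nt QtD At 0 \<in> carrier_mat ?nt ?nt" unfolding Ptilde_zero using St by (rule minus_carrier_mat)
  have dPh0: "det (Phat L M N QD A 0) \<noteq> 0" unfolding Phat_zero by simp
  have dPt0: "det (Ptilde L Mt Nt QtD At 0) \<noteq> 0" using det_Ptilde_zero by simp
  note iPh = mat_tendsto_minv[OF Ph Ph0 dPh0] and iPt = mat_tendsto_minv[OF Pt Pt0 dPt0]
  note iPh0 = minv_inverse(1)[OF Ph0 invertible_mat_if_det_nonzero[OF Ph0 dPh0]]
    and iPt0 = minv_inverse(1)[OF Pt0 invertible_mat_if_det_nonzero[OF Pt0 dPt0]]
  have TS: "mat_tendsto (\<lambda>L'. T_S L M N Q QD A (mu L')) (T_S L M N Q QD A 0)"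
    unfolding T_S_def
    by (rule mat_tendsto_diff[OF mat_tendsto_const mat_tendsto_mult[OF iPh C iPh0 C0] one_carrier_mat
          mult_carrier_mat[OF iPh0 C0]])
  have PiPt: "interpolation L * minv (Ptilde L Mt Nt QtD At 0) \<in> carrier_mat ?n ?nt"
    using P iPt0 by simp
  have corr: "mat_tendsto (\<lambda>L'. interpolation L * minv (Ptilde L Mt Nt QtD At (mu L')) * restriction L * Cmat L M N Q A (mu L'))
      (interpolation L * minv (Ptilde L Mt Nt QtD At 0) * restriction L * Cmat L M N Q A 0)"
    by (rule mat_tendsto_mult[OF mat_tendsto_mult[OF mat_tendsto_mult[OF mat_tendsto_const iPt P iPt0]
          mat_tendsto_const PiPt R] C mult_carrier_mat[OF PiPt R] C0])
  have TC: "mat_tendsto (\<lambda>L'. T_CGC L M N Mt Nt Q A QtD At TFQ TCQ TFA TCA (mu L'))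
      (T_CGC L M N Mt Nt Q A QtD At TFQ TCQ TFA TCA 0)"
    unfolding T_CGC_def
    by (rule mat_tendsto_diff[OF mat_tendsto_const corr one_carrier_mat mult_carrier_mat[OF mult_carrier_mat[OF PiPt R] C0]])
  have TS0: "T_S L M N Q QD A 0 \<in> carrier_mat ?n ?n"
    unfolding T_S_def by (rule minus_carrier_mat[OF mult_carrier_mat[OF iPh0 C0]])
  have TC0: "T_CGC L M N Mt Nt Q A QtD At TFQ TCQ TFA TCA 0 \<in> carrier_mat ?n ?n"
    unfolding T_CGC_def by (rule minus_carrier_mat[OF mult_carrier_mat[OF mult_carrier_mat[OF PiPt R] C0]])
  show ?thesis by (rule mat_tendsto_mult[OF TS TC TS0 TC0])
qed

lemma block_subdiagonal_limit_iteration: "block_subdiagonal (M * N) (M * N) (limit_iteration L)"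
proof -
  let ?n = "L * M * N"
  note S = fine_shift_carrier_mat[of L] and P = interpolation_carrier_mat[of L] and R = restriction_carrier_mat[of L]
  have "block_diagonal (M * N) (Mt * Nt) (interpolation L)" "block_diagonal (Mt * Nt) (M * N) (restriction L)"
    using TCQ TCA TFQ TFA by (auto intro!: block_diagonal_kron_one kron_carrier_mat)
  hence "block_diagonal (M * N) (M * N) (interpolation L * restriction L)"
    by (rule block_diagonal_mult[OF P R])
  hence "block_diagonal (M * N) (M * N) (1\<^sub>m ?n - interpolation L * restriction L)"
    by (rule block_diagonal_diff[OF one_carrier_mat mult_carrier_mat[OF P R] block_diagonal_one])
  moreover have "block_subdiagonal (M * N) (M * N) (fine_shift L)"
    by (rule block_subdiagonal_kron_Esub) (auto intro: kron_carrier_mat)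
  ultimately show ?thesis
    using block_subdiagonal_mult[OF S minus_carrier_mat[OF mult_carrier_mat[OF P R]]] by blast
qed

lemma blk_limit_iteration:
  assumes "k < L" and "k \<noteq> 1"
  shows "blk (M * N) (limit_iteration L) k 0 = 0\<^sub>m (M * N) (M * N)"
  using assms limit_iteration_carrier_mat[of L]
  by (intro blk_block_subdiagonal[OF _ block_subdiagonal_limit_iteration]) (auto simp: mult.assoc)

lemma blk_limit_iteration_coarse_kernel:
  assumes M: "0 < M" and w: "w \<in> carrier_vec N" and ker: "cmat TFA *\<^sub>v w = 0\<^sub>v Nt"
  defines "v \<equiv> kron_vec (vec M (\<lambda>_. 1)) w"
  shows "blk (M * N) (limit_iteration 2) 1 0 *\<^sub>v v = v"
proof -
  let ?n = "2 * M * N" and ?x = "kron_vec (unit_vec 2 0) v"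
  note S = fine_shift_carrier_mat[of 2] and P = interpolation_carrier_mat[of 2] and R = restriction_carrier_mat[of 2]
  have v: "v \<in> carrier_vec (M * N)" using w unfolding v_def carrier_vec_def by simp
  have x: "?x \<in> carrier_vec ?n" using carrier_vecD[OF v] by (intro carrier_vecI) (simp add: mult_ac)
  have "restriction 2 *\<^sub>v ?x = kron_vec (1\<^sub>m 2 *\<^sub>v unit_vec 2 0) (kron_vec (cmat TFQ *\<^sub>v vec M (\<lambda>_. 1)) (cmat TFA *\<^sub>v w))"
    using TFQ TFA w by (simp add: v_def mult_kron_vec)
  hence Rx: "restriction 2 *\<^sub>v ?x = 0\<^sub>v (2 * Mt * Nt)"
    using TFQ by (simp add: ker kron_vec_zero mult_ac)
  have "(1\<^sub>m ?n - interpolation 2 * restriction 2) *\<^sub>v ?x = ?x - interpolation 2 *\<^sub>v (restriction 2 *\<^sub>v ?x)"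
    unfolding minus_mult_distrib_mat_vec[OF one_carrier_mat mult_carrier_mat[OF P R] x]
      assoc_mult_mat_vec[OF P R x] one_mult_mat_vec[OF x] ..
  also have "\<dots> = ?x"
  proof -
    have "interpolation 2 *\<^sub>v 0\<^sub>v (2 * Mt * Nt) = 0\<^sub>v ?n"
      using P by (intro eq_vecI) (auto simp: scalar_prod_def)
    thus ?thesis unfolding Rx using x by simp
  qed
  \<comment> \<open>Since the restriction annihilates \<open>?x\<close>, the limit iteration acts on it as the shift.\<close>
  finally have "limit_iteration 2 *\<^sub>v ?x = fine_shift 2 *\<^sub>v ?x"
    using assoc_mult_mat_vec[OF S minus_carrier_mat[OF mult_carrier_mat[OF P R]] x] by simp
  also have "\<dots> = kron_vec (Esub 2 *\<^sub>v unit_vec 2 0) (kron_vec (Nlast M *\<^sub>v vec M (\<lambda>_. 1)) (1\<^sub>m N *\<^sub>v w))"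
    using w by (simp add: v_def mult_kron_vec)
  also have "\<dots> = kron_vec (unit_vec 2 1) v"
    using w M by (simp add: v_def Esub_mult_unit_vec Nlast_mult_const_vec)
  finally have Yx: "limit_iteration 2 *\<^sub>v ?x = kron_vec (unit_vec 2 1) v" .
  have "blk (M * N) (limit_iteration 2) 1 0 *\<^sub>v v = vec (M * N) (\<lambda>r. (limit_iteration 2 *\<^sub>v ?x) $ (1 * (M * N) + r))"
    using limit_iteration_carrier_mat[of 2] v by (intro blk_mult_vec) (auto simp: mult_ac)
  also have "\<dots> = v"
  proof (rule eq_vecI)
    fix r assume "r < dim_vec v"
    hence r: "r < M * N" using v by simp
    moreover have "M * N \<noteq> 0" using r by (metis less_zeroE)
    ultimately have "(M * N + r) div (M * N) = 1" "(M * N + r) mod (M * N) = r"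
      using div_add_self1[of "M * N" r] by simp_all
    thus "vec (M * N) (\<lambda>r. (limit_iteration 2 *\<^sub>v ?x) $ (1 * (M * N) + r)) $ r = v $ r"
      unfolding Yx using r v by simp
  qed (use v in simp)
  finally show ?thesis .
qed

lemma toeplitz_limit_blocks_iteration:
  assumes mu: "(mu \<longlongrightarrow> 0) sequentially"
    and iPh: "\<And>L. 0 < L \<Longrightarrow> invertible_mat (Phat L M N QD A (mu L))"
    and iPt: "\<And>L. 0 < L \<Longrightarrow> invertible_mat (Ptilde L Mt Nt QtD At (mu L))"
    and comm: "\<And>L. 0 < L \<Longrightarrow> coarse_shift L * restriction L = restriction L * fine_shift L"
  shows "toeplitz_limit_blocks (M * N) (\<lambda>L. iteration L (mu L)) k
    = (if k = 1 then blk (M * N) (limit_iteration 2) 1 0 else 0\<^sub>m (M * N) (M * N))"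
proof -
  have "toeplitz_limit_blocks (M * N) (\<lambda>L. iteration L (mu L)) k
      = (if k < 0 then 0\<^sub>m (M * N) (M * N) else blk (M * N) (limit_iteration (nat k + 1)) (nat k) 0)"
  proof (rule toeplitz_limit_blocks_eq[where F = "\<lambda>K L. iteration K (mu L)"])
    fix K L :: nat assume "0 < K" "K \<le> L"
    thus "upper_right_zero (K * (M * N)) (K * (M * N)) (iteration L (mu L)) \<and>
        leading_submat (K * (M * N)) (K * (M * N)) (iteration L (mu L)) = iteration K (mu L)"
      using iteration_leading_submat iPh iPt by simp
  next
    fix L :: nat assume "0 < L"
    thus "dim_col (iteration L (mu L)) = L * (M * N)" using iteration_leading_submat(3) iPh iPt by blast
  next
    fix K :: nat assume "0 < K"
    hence "iteration K 0 = limit_iteration K" by (rule iteration_at_zero[OF comm])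
    with iteration_tendsto[OF mu, of K] show "mat_tendsto (\<lambda>L. iteration K (mu L)) (limit_iteration K)"
      by simp
  qed (use limit_iteration_carrier_mat in \<open>simp add: mult.assoc\<close>)
  also have "\<dots> = (if k = 1 then blk (M * N) (limit_iteration 2) 1 0 else 0\<^sub>m (M * N) (M * N))"
    using blk_limit_iteration[of "nat k" "nat k + 1"] by (auto simp: numeral_2_eq_2 nat_eq_iff)
  finally show ?thesis .
qed

lemma limit_block_eigenvector:
  assumes M: "0 < M" and NtN: "Nt < N"
  obtains v where "v \<in> carrier_vec (M * N)" "v \<noteq> 0\<^sub>v (M * N)"
    "blk (M * N) (limit_iteration 2) 1 0 *\<^sub>v v = v"
proof -
  obtain w where w: "w \<in> carrier_vec N" "w \<noteq> 0\<^sub>v N" "cmat TFA *\<^sub>v w = 0\<^sub>v Nt"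
    using exists_nonzero_kernel_vec[OF cmat_carrier_mat[OF TFA] NtN] by blast
  have "vec M (\<lambda>_. 1) \<noteq> (0\<^sub>v M :: complex vec)"
  proof
    assume "vec M (\<lambda>_. 1) = (0\<^sub>v M :: complex vec)"
    hence "vec M (\<lambda>_. 1) $ 0 = (0\<^sub>v M :: complex vec) $ 0" by simp
    thus False using M by simp
  qed
  hence "kron_vec (vec M (\<lambda>_. 1)) w \<in> carrier_vec (M * N)" "kron_vec (vec M (\<lambda>_. 1)) w \<noteq> 0\<^sub>v (M * N)"
    using kron_vec_nonzero[of "vec M (\<lambda>_. 1)" w] carrier_vecD[OF w(1)] w(2) by (auto intro: carrier_vecI)
  with blk_limit_iteration_coarse_kernel[OF M w(1,3)] show ?thesis using that by blast
qed

lemma one_le_toeplitz_spectral_radius_iteration: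
  assumes M: "0 < M" and NtN: "Nt < N" and mu: "(mu \<longlongrightarrow> 0) sequentially"
    and iPh: "\<And>L. 0 < L \<Longrightarrow> invertible_mat (Phat L M N QD A (mu L))"
    and iPt: "\<And>L. 0 < L \<Longrightarrow> invertible_mat (Ptilde L Mt Nt QtD At (mu L))"
    and comm: "\<And>L. 0 < L \<Longrightarrow> coarse_shift L * restriction L = restriction L * fine_shift L"
  shows "1 \<le> toeplitz_spectral_radius (M * N) (toeplitz_limit_blocks (M * N) (\<lambda>L. iteration L (mu L)))"
proof (rule one_le_toeplitz_spectral_radius)
  fix x
  let ?T = "toeplitz_limit_blocks (M * N) (\<lambda>L. iteration L (mu L))"
  let ?B = "blk (M * N) (limit_iteration 2) 1 0"
  obtain v where v: "v \<in> carrier_vec (M * N)" "v \<noteq> 0\<^sub>v (M * N)" and Bv: "?B *\<^sub>v v = v"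
    using limit_block_eigenvector[OF M NtN] .
  note blocks = toeplitz_limit_blocks_iteration[OF mu iPh iPt comm]
  have B: "?B \<in> carrier_mat (M * N) (M * N)" by (simp add: blk_def)
  have "toeplitz_symbol (M * N) ?T x = cis x \<cdot>\<^sub>m ?T 1"
    using blocks B by (intro toeplitz_symbol_single_block) auto
  hence "toeplitz_symbol (M * N) ?T x = cis x \<cdot>\<^sub>m ?B" by (simp add: blocks)
  moreover have "(cis x \<cdot>\<^sub>m ?B) *\<^sub>v v = cis x \<cdot>\<^sub>v v"
    using Bv B v(1) by (simp add: smult_mult_mat_vec)
  hence "norm (cis x) \<le> spectral_radius (cis x \<cdot>\<^sub>m ?B)"
    by (rule norm_eigenvalue_le_spectral_radius[OF smult_carrier_mat[OF B] v])
  ultimately show "1 \<le> spectral_radius (toeplitz_symbol (M * N) ?T x)" by simp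
qed

end

theorem theorem6:
  fixes M N Mt Nt :: nat
    and tau taut :: "nat \<Rightarrow> real"
    and QD QtD :: "real mat"
    and A At :: "complex mat"
    and TFAC TCAF :: "real mat"
    and Tend c :: real
    and mu :: "nat \<Rightarrow> real"
  assumes "0 < M" and "0 < Nt" and "Mt \<le> M" and "Nt < N" and "0 < Mt"
    and "right_radau_nodes M tau" and "right_radau_nodes Mt taut"
    and "lower_tri M QD" and "lower_tri Mt QtD"
    and "A \<in> carrier_mat N N" and "At \<in> carrier_mat Nt Nt"
    and "TFAC \<in> carrier_mat Nt N" and "TCAF \<in> carrier_mat N Nt"
    and "0 < Tend" and "0 < c"
    and "\<And>L. 0 < L \<Longrightarrow> mu L = c * Tend / real L"
    and "\<And>L. 0 < L \<Longrightarrow> invertible_mat (Phat L M N QD A (mu L))"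
    and "\<And>L. 0 < L \<Longrightarrow> invertible_mat (Ptilde L Mt Nt QtD At (mu L))"
    and "\<And>L. 0 < L \<Longrightarrow>
           kron (Esub L) (kron (Nlast Mt) (1\<^sub>m Nt)) *
             kron (1\<^sub>m L) (kron (cmat (lagrange_transfer Mt taut M tau)) (cmat TFAC))
         = kron (1\<^sub>m L) (kron (cmat (lagrange_transfer Mt taut M tau)) (cmat TFAC)) *
             kron (Esub L) (kron (Nlast M) (1\<^sub>m N))"
  shows "1 \<le> toeplitz_spectral_radius (M * N)
           (toeplitz_limit_blocks (M * N)
              (\<lambda>L. T_S L M N (collocation_Q M tau) QD A (mu L) *
                   T_CGC L M N Mt Nt (collocation_Q M tau) A QtD At
                     (lagrange_transfer Mt taut M tau) (lagrange_transfer M tau Mt taut)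
                     TFAC TCAF (mu L)))"
proof -
  interpret P: pfasst_operators M N Mt Nt "collocation_Q M tau" QD QtD "lagrange_transfer Mt taut M tau"
      "lagrange_transfer M tau Mt taut" TFAC TCAF A At
    by unfold_locales
      (use assms(8-13) in \<open>auto simp: lower_tri_def collocation_Q_def lagrange_transfer_def\<close>)
  have "(mu \<longlongrightarrow> 0) sequentially"
    using assms(16) by (rule tendsto_const_over_nat)
  thus ?thesis
    using P.one_le_toeplitz_spectral_radius_iteration[OF assms(1,4)] assms(17-19) by blast
qed

end
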